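(* Let $G$ be a $K_{3,3}$-minor free graph of order $n\geq 11$ with $\Delta(G)\leq n-4$. Then $q(G)\leq n+2$.
   Context: All graphs are finite, simple and undirected. $q(G)$ is the largest eigenvalue of the signless Laplacian matrix $Q(G)=D(G)+A(G)$. $\Delta(G)$ is the maximum degree of $G$. A graph $H$ is a minor of $G$ if $H$ can be obtained from $G$ by deleting edges, contracting edges, or deleting vertices; $G$ is $H$-minor free if it has no minor isomorphic to $H$. $K_{3,3}$ is the complete bipartite graph with both parts of size 3. *)

theory Defs
  imports Complex_Main
begin

definition simple_graph :: "'a set \<Rightarrow> 'a set set \<Rightarrow> bool" where
  "simple_graph V E \<longleftrightarrow> finite V \<and> (\<forall>e\<in>E. e \<subseteq> V \<and> card e = 2)"

definition adj :: "'a set set \<Rightarrow> 'a \<Rightarrow> 'a \<Rightarrow> bool" where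
  "adj E u v \<longleftrightarrow> {u, v} \<in> E"

definition degree :: "'a set set \<Rightarrow> 'a \<Rightarrow> nat" where
  "degree E v = card {e \<in> E. v \<in> e}"

definition max_degree :: "'a set \<Rightarrow> 'a set set \<Rightarrow> nat" where
  "max_degree V E = Max (degree E ` V)"

text \<open>Eigenvalues of the signless Laplacian Q(G) = D(G) + A(G), viewed as a
  real symmetric matrix indexed by V (all its eigenvalues are real).\<close>

definition signless_laplacian_eigenvalue :: "'a set \<Rightarrow> 'a set set \<Rightarrow> real \<Rightarrow> bool" where
  "signless_laplacian_eigenvalue V E mu \<longleftrightarrow>
     (\<exists>x :: 'a \<Rightarrow> real. (\<exists>v\<in>V. x v \<noteq> 0) \<and>
        (\<forall>v\<in>V. real (degree E v) * x v + (\<Sum>u\<in>{u\<in>V. adj E v u}. x u) = mu * x v))"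

definition q_index :: "'a set \<Rightarrow> 'a set set \<Rightarrow> real" where
  "q_index V E = Max {mu. signless_laplacian_eigenvalue V E mu}"

definition delete_vertex :: "'a \<Rightarrow> 'a set \<times> 'a set set \<Rightarrow> 'a set \<times> 'a set set" where
  "delete_vertex x G = (fst G - {x}, {e \<in> snd G. x \<notin> e})"

definition delete_edge :: "'a set \<Rightarrow> 'a set \<times> 'a set set \<Rightarrow> 'a set \<times> 'a set set" where
  "delete_edge e G = (fst G, snd G - {e})"

definition contract_edge :: "'a \<Rightarrow> 'a \<Rightarrow> 'a set \<times> 'a set set \<Rightarrow> 'a set \<times> 'a set set" where
  "contract_edge u v G =
     (fst G - {v},
      {e'. \<exists>e\<in>snd G. e' = (\<lambda>w. if w = v then u else w) ` e \<and> card e' = 2})"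

inductive minor :: "'a set \<times> 'a set set \<Rightarrow> 'a set \<times> 'a set set \<Rightarrow> bool" where
  refl: "minor G G"
| del_vertex: "minor G H \<Longrightarrow> x \<in> fst H \<Longrightarrow> minor G (delete_vertex x H)"
| del_edge: "minor G H \<Longrightarrow> e \<in> snd H \<Longrightarrow> minor G (delete_edge e H)"
| contract: "minor G H \<Longrightarrow> {u, v} \<in> snd H \<Longrightarrow> u \<noteq> v \<Longrightarrow> minor G (contract_edge u v H)"

definition is_K33 :: "'a set \<times> 'a set set \<Rightarrow> bool" where
  "is_K33 H \<longleftrightarrow> (\<exists>A B. A \<inter> B = {} \<and> card A = 3 \<and> card B = 3 \<and>
       fst H = A \<union> B \<and> snd H = {{a, b} | a b. a \<in> A \<and> b \<in> B})"

definition K33_minor_free :: "'a set \<Rightarrow> 'a set set \<Rightarrow> bool" where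
  "K33_minor_free V E \<longleftrightarrow> \<not> (\<exists>H. minor (V, E) H \<and> is_K33 H)"

end

theory Submission
  imports Defs "Jordan_Normal_Form.Spectral_Radius"
begin

text \<open>The spectral input is the bound \<open>q(G) \<le> max\<^sub>v (d\<^sub>v + m\<^sub>v)\<close>, where \<open>m\<^sub>v\<close> is the average
  degree of the neighbours of \<open>v\<close>; it comes from the eigen equation at a vertex maximising
  \<open>\<bar>x\<^sub>v\<bar> / d\<^sub>v\<close>. So it suffices that \<open>d\<^sub>v\<^sup>2 + \<Sum>\<^bsub>u \<sim> v\<^esub> d\<^sub>u \<le> (n + 2) d\<^sub>v\<close> for every \<open>v\<close>, which is
  immediate when \<open>d\<^sub>v \<le> 6\<close> because all degrees are at most \<open>n - 4\<close>. For larger \<open>d\<^sub>v\<close> write the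
  degree sum over \<open>N(v)\<close> as \<open>d\<^sub>v + 2 e(N(v)) + \<Sum>\<^sub>r |N(r) \<inter> N(v)|\<close>, \<open>r\<close> ranging over the
  vertices at distance 2 or more. The neighbourhood \<open>N(v)\<close> has no \<open>K\<^sub>2\<^sub>,\<^sub>3\<close> minor, since \<open>v\<close>
  would complete it to a \<open>K\<^sub>3\<^sub>,\<^sub>3\<close>, so it spans at most \<open>2 d\<^sub>v - 2\<close> edges; three vertices
  have at most two common neighbours; and if some \<open>r\<close> sees many vertices of \<open>N(v)\<close>, the
  edge bound improves by contracting \<open>r\<close> into one of them.\<close>

section \<open>Neighbourhoods in simple graphs\<close>

definition neighbors :: "'a set set \<Rightarrow> 'a \<Rightarrow> 'a set" where
  "neighbors F x = {y. {x, y} \<in> F}"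

lemma in_neighbors_iff: "y \<in> neighbors F x \<longleftrightarrow> {x, y} \<in> F"
  by (simp add: neighbors_def)

lemma neighbors_sym: "y \<in> neighbors F x \<longleftrightarrow> x \<in> neighbors F y"
  by (simp add: neighbors_def insert_commute)

lemma edge_sym: "{x, y} \<in> F \<Longrightarrow> {y, x} \<in> F"
  by (simp add: insert_commute)

lemma edge_endpoints:
  assumes "simple_graph W F" "{x, y} \<in> F"
  shows "x \<in> W" "y \<in> W" "x \<noteq> y"
proof -
  have "{x, y} \<subseteq> W" "card {x, y} = 2" using assms unfolding simple_graph_def by auto
  then show "x \<in> W" "y \<in> W" "x \<noteq> y" by auto
qed

lemma simple_graph_edgeE:
  assumes "simple_graph W F" "e \<in> F"
  obtains x y where "x \<noteq> y" "e = {x, y}"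
  using assms unfolding simple_graph_def by (metis card_2_iff)

lemma simple_graph_edge_at:
  assumes "simple_graph W F" "e \<in> F" "w \<in> e"
  obtains t where "t \<noteq> w" "e = {w, t}"
  using simple_graph_edgeE[OF assms(1,2)] assms(3) by (metis insertE singletonD insert_commute)

lemma simple_graph_finite_edges: "simple_graph W F \<Longrightarrow> finite F"
  unfolding simple_graph_def by (meson Pow_iff finite_Pow_iff finite_subset subsetI)

lemma neighbors_subset: "simple_graph W F \<Longrightarrow> neighbors F x \<subseteq> W"
  using edge_endpoints(2) by (fastforce simp: in_neighbors_iff)

lemma finite_neighbors: "simple_graph W F \<Longrightarrow> finite (neighbors F x)"
  using neighbors_subset unfolding simple_graph_def by (meson finite_subset)

lemma not_in_neighbors_self: "simple_graph W F \<Longrightarrow> x \<notin> neighbors F x"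
  by (metis edge_endpoints(3) in_neighbors_iff)

lemma degree_eq_card_neighbors:
  assumes G: "simple_graph W F"
  shows "Defs.degree F x = card (neighbors F x)"
proof -
  have "bij_betw (\<lambda>y. {x, y}) (neighbors F x) {e \<in> F. x \<in> e}"
  proof (rule bij_betwI')
    fix y z assume "y \<in> neighbors F x" "z \<in> neighbors F x"
    then show "({x, y} = {x, z}) = (y = z)"
      using not_in_neighbors_self[OF G] by (metis doubleton_eq_iff)
  next
    fix e assume "e \<in> {e \<in> F. x \<in> e}"
    then obtain t where "e = {x, t}" "e \<in> F" using simple_graph_edge_at[OF G] by blast
    then show "\<exists>y\<in>neighbors F x. e = {x, y}" by (auto simp: in_neighbors_iff)
  qed (simp add: in_neighbors_iff)
  then show ?thesis unfolding Defs.degree_def by (simp add: bij_betw_same_card)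
qed

lemma sum_card_neighbors:
  assumes G: "simple_graph W F"
  shows "(\<Sum>x\<in>W. card (neighbors F x)) = 2 * card F"
proof -
  have fW: "finite W" and fF: "finite F"
    using G simple_graph_finite_edges unfolding simple_graph_def by auto
  have "(\<Sum>x\<in>W. card (neighbors F x)) = (\<Sum>x\<in>W. card {e \<in> F. x \<in> e})"
    using degree_eq_card_neighbors[OF G] by (simp add: Defs.degree_def)
  also have "\<dots> = (\<Sum>x\<in>W. \<Sum>e\<in>F. if x \<in> e then 1 else 0)"
    using fF by (simp add: sum.inter_filter[symmetric])
  also have "\<dots> = (\<Sum>e\<in>F. \<Sum>x\<in>W. if x \<in> e then 1 else 0)"
    by (rule sum.swap)
  also have "\<dots> = (\<Sum>e\<in>F. card {x \<in> W. x \<in> e})"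
    using fW by (simp add: sum.inter_filter[symmetric])
  also have "\<dots> = (\<Sum>e\<in>F. 2)"
  proof (rule sum.cong)
    fix e assume "e \<in> F"
    then have "e \<subseteq> W" "card e = 2" using G unfolding simple_graph_def by auto
    then show "card {x \<in> W. x \<in> e} = 2" by (simp add: Int_absorb1 Collect_conj_eq)
  qed simp
  finally show ?thesis by simp
qed

lemma simple_graph_induced: "simple_graph W F \<Longrightarrow> U \<subseteq> W \<Longrightarrow> simple_graph U {e \<in> F. e \<subseteq> U}"
  unfolding simple_graph_def by (auto intro: finite_subset)

lemma neighbors_induced: "x \<in> U \<Longrightarrow> neighbors {e \<in> F. e \<subseteq> U} x = neighbors F x \<inter> U"
  unfolding neighbors_def by auto

lemma sum_card_neighbors_inside:
  assumes "simple_graph W F" "U \<subseteq> W"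
  shows "(\<Sum>x\<in>U. card (neighbors F x \<inter> U)) = 2 * card {e \<in> F. e \<subseteq> U}"
  using sum_card_neighbors[OF simple_graph_induced[OF assms]] by (simp add: neighbors_induced)

lemma simple_graph_delete_vertex: "simple_graph W F \<Longrightarrow> simple_graph (W - {x}) {e \<in> F. x \<notin> e}"
  unfolding simple_graph_def by auto

lemma card_edges_delete_vertex:
  assumes G: "simple_graph W F"
  shows "card F = card {e \<in> F. x \<notin> e} + card (neighbors F x)"
proof -
  have "F = {e \<in> F. x \<notin> e} \<union> {e \<in> F. x \<in> e}" by auto
  then have "card F = card {e \<in> F. x \<notin> e} + card {e \<in> F. x \<in> e}"
    using simple_graph_finite_edges[OF G] by (metis (no_types, lifting) card_Un_disjoint
        disjoint_iff finite_Un mem_Collect_eq)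
  then show ?thesis using degree_eq_card_neighbors[OF G] by (simp add: Defs.degree_def)
qed

lemma card_ge_3E:
  assumes "3 \<le> card A"
  obtains a b c where "a \<in> A" "b \<in> A" "c \<in> A" "a \<noteq> b" "a \<noteq> c" "b \<noteq> c"
proof -
  obtain T where T: "T \<subseteq> A" "card T = 3" using obtain_subset_with_card_n[OF assms] by blast
  then obtain a b c where "T = {a, b, c}" "a \<noteq> b" "b \<noteq> c" "a \<noteq> c"
    unfolding card_3_iff by blast
  then show ?thesis using that[of a b c] T(1) by simp
qed

section \<open>Connected vertex sets\<close>

definition connected_set :: "'a set set \<Rightarrow> 'a set \<Rightarrow> bool" where
  "connected_set F B \<longleftrightarrow> B \<noteq> {} \<and>
     (\<forall>S. S \<subseteq> B \<longrightarrow> S \<noteq> {} \<longrightarrow> S \<noteq> B \<longrightarrow> (\<exists>x\<in>S. \<exists>y\<in>B - S. {x, y} \<in> F))"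

lemma connected_set_singleton [simp]: "connected_set F {x}"
  unfolding connected_set_def by auto

lemma connected_set_mono: "connected_set F B \<Longrightarrow> F \<subseteq> F' \<Longrightarrow> connected_set F' B"
  unfolding connected_set_def by blast

lemma connected_set_insert:
  assumes B: "connected_set F B" and "x \<notin> B" "p \<in> B" "{x, p} \<in> F"
  shows "connected_set F (insert x B)"
  unfolding connected_set_def
proof (intro conjI allI impI)
  fix S assume S: "S \<subseteq> insert x B" "S \<noteq> {}" "S \<noteq> insert x B"
  show "\<exists>a\<in>S. \<exists>b\<in>insert x B - S. {a, b} \<in> F"
  proof (cases "S - {x} = {}")
    case True
    then have "S = {x}" using S by auto
    then show ?thesis using assms by auto
  next
    case nonempty: False
    show ?thesis
    proof (cases "S - {x} = B")
      case True
      then have "x \<notin> S" using S \<open>x \<notin> B\<close> by auto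
      then show ?thesis using True assms by (auto simp: insert_commute)
    next
      case proper: False
      have "S - {x} \<subseteq> B" using S by auto
      then obtain a b where "a \<in> S - {x}" "b \<in> B - (S - {x})" "{a, b} \<in> F"
        using B nonempty proper unfolding connected_set_def by blast
      then show ?thesis using \<open>x \<notin> B\<close> by auto
    qed
  qed
qed simp

lemma connected_set_has_edge:
  assumes "connected_set F B" "u \<in> B" "B \<noteq> {u}"
  obtains w where "w \<in> B" "w \<noteq> u" "{u, w} \<in> F"
proof -
  have "\<exists>x\<in>{u}. \<exists>y\<in>B - {u}. {x, y} \<in> F"
    using assms unfolding connected_set_def by blast
  then show ?thesis using that by blast
qed

lemma connected_componentE:
  assumes "finite S" "z \<in> S"
  obtains K where "K \<subseteq> S" "z \<in> K" "connected_set F K" "\<forall>p\<in>K. \<forall>q\<in>S - K. {p, q} \<notin> F"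
proof -
  let ?P = "\<lambda>K. K \<subseteq> S \<and> z \<in> K \<and> connected_set F K"
  have "?P {z}" using assms by simp
  moreover have "\<forall>K. ?P K \<longrightarrow> card K < card S + 1"
    using assms(1) by (auto intro: card_mono le_imp_less_Suc)
  ultimately obtain K where K: "?P K" "\<forall>K'. ?P K' \<longrightarrow> card K' \<le> card K"
    using ex_has_greatest_nat[of ?P "{z}" card "card S + 1"] by blast
  have "{p, q} \<notin> F" if "p \<in> K" "q \<in> S - K" for p q
  proof
    assume "{p, q} \<in> F"
    then have "?P (insert q K)"
      using K(1) that connected_set_insert[of F K q p] by (auto simp: insert_commute)
    then have "card (insert q K) \<le> card K" using K(2) by blast
    moreover have "finite K" using K(1) assms(1) finite_subset by blast
    ultimately show False using that by simp
  qed
  then show ?thesis using that K(1) by blast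
qed

section \<open>Minors\<close>

lemma minor_trans: "minor H K \<Longrightarrow> minor G H \<Longrightarrow> minor G K"
  by (induction H K rule: minor.induct) (auto intro: minor.intros)

lemma minor_delete_edges:
  assumes "finite D" "D \<subseteq> E"
  shows "minor (V, E) (V, E - D)"
  using assms
proof (induction D rule: finite_induct)
  case (insert e D)
  then have "minor (V, E) (delete_edge e (V, E - D))"
    by (intro minor.del_edge) auto
  moreover have "E - insert e D = E - D - {e}" by auto
  ultimately show ?case by (simp add: delete_edge_def)
qed (simp add: minor.refl)

lemma minor_delete_isolated_vertices:
  assumes "finite X" "X \<subseteq> V" "\<forall>e\<in>E. e \<inter> X = {}"
  shows "minor (V, E) (V - X, E)"
  using assms
proof (induction X rule: finite_induct)
  case (insert x X)
  then have "minor (V, E) (delete_vertex x (V - X, E))"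
    by (intro minor.del_vertex) auto
  moreover have "{e \<in> E. x \<notin> e} = E" using insert.prems by auto
  moreover have "V - insert x X = V - X - {x}" by auto
  ultimately show ?case by (simp add: delete_vertex_def)
qed (simp add: minor.refl)

definition contract_map :: "'a \<Rightarrow> 'a \<Rightarrow> 'a \<Rightarrow> 'a" where
  "contract_map u w z = (if z = w then u else z)"

lemma contract_edge_eq:
  "contract_edge u w (V, E) =
     (V - {w}, {e'. \<exists>e\<in>E. e' = contract_map u w ` e \<and> card e' = 2})"
  unfolding contract_edge_def contract_map_def by simp

lemma contract_map_image_edge:
  assumes "{x, y} \<in> E" "contract_map u w x \<noteq> contract_map u w y"
  shows "{contract_map u w x, contract_map u w y} \<in> snd (contract_edge u w (V, E))"
  unfolding contract_edge_eq using assms by (auto intro!: bexI[of _ "{x, y}"])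

lemma contract_map_image_fixed: "w \<notin> e \<Longrightarrow> contract_map u w ` e = e"
  unfolding contract_map_def by auto

lemma contract_map_image_at: "t \<noteq> w \<Longrightarrow> contract_map u w ` {w, t} = {u, t}"
  by (auto simp: contract_map_def)

lemma simple_graph_contract:
  assumes "simple_graph V E" "u \<in> V" "u \<noteq> w"
  shows "simple_graph (V - {w}) (snd (contract_edge u w (V, E)))"
proof -
  have "contract_map u w ` e \<subseteq> V - {w}" if "e \<in> E" for e
    using assms that unfolding simple_graph_def contract_map_def by auto
  then show ?thesis using assms unfolding simple_graph_def contract_edge_eq by auto
qed

lemma contract_edge_subset:
  assumes G: "simple_graph V E"
  shows "snd (contract_edge u w (V, E)) \<subseteq> E \<union> {{u, x} | x. x \<in> neighbors E w}"
proof
  fix e' assume "e' \<in> snd (contract_edge u w (V, E))"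
  then obtain e where e: "e \<in> E" "e' = contract_map u w ` e"
    unfolding contract_edge_eq by auto
  show "e' \<in> E \<union> {{u, x} | x. x \<in> neighbors E w}"
  proof (cases "w \<in> e")
    case True
    then obtain t where "t \<noteq> w" "e = {w, t}" using simple_graph_edge_at[OF G e(1)] by blast
    then have "e' = {u, t}" "t \<in> neighbors E w"
      using e contract_map_image_at[OF \<open>t \<noteq> w\<close>] by (simp_all add: in_neighbors_iff)
    then show ?thesis by blast
  qed (use e contract_map_image_fixed[of w e u] in simp)
qed

lemma connected_set_contract:
  assumes B: "connected_set E B" and wu: "w \<in> B \<longrightarrow> u \<in> B" and "u \<noteq> w" and "B \<noteq> {w}"
  shows "connected_set (snd (contract_edge u w (V, E))) (B - {w})"
  unfolding connected_set_def
proof (intro conjI allI impI)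
  show "B - {w} \<noteq> {}" using B \<open>B \<noteq> {w}\<close> unfolding connected_set_def by auto
  fix S assume S: "S \<subseteq> B - {w}" "S \<noteq> {}" "S \<noteq> B - {w}"
  \<comment> \<open>Pull \<open>S\<close> back to \<open>B\<close>, putting \<open>w\<close> on the side of \<open>u\<close>.\<close>
  define S0 where "S0 = (if u \<in> S \<and> w \<in> B then insert w S else S)"
  have "S0 \<subseteq> B" "S0 \<noteq> {}" "S0 \<noteq> B"
    using S wu unfolding S0_def by (auto split: if_splits)
  then obtain x y where xy: "x \<in> S0" "y \<in> B - S0" "{x, y} \<in> E"
    using B unfolding connected_set_def by blast
  have "contract_map u w x \<in> S" "contract_map u w y \<in> (B - {w}) - S"
    using xy S wu \<open>u \<noteq> w\<close> unfolding S0_def contract_map_def by (auto split: if_splits)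
  moreover from this have "contract_map u w x \<noteq> contract_map u w y" by auto
  ultimately show "\<exists>a\<in>S. \<exists>b\<in>B - {w} - S. {a, b} \<in> snd (contract_edge u w (V, E))"
    using contract_map_image_edge[OF xy(3)] by blast
qed

section \<open>Models of complete bipartite minors\<close>

definition joined :: "'a set set \<Rightarrow> 'a set \<Rightarrow> 'a set \<Rightarrow> bool" where
  "joined F X Y \<longleftrightarrow> (\<exists>x\<in>X. \<exists>y\<in>Y. {x, y} \<in> F)"

text \<open>Branch sets \<open>B 0, \<dots>, B (s + t - 1)\<close> of a \<open>K\<^sub>s\<^sub>,\<^sub>t\<close> minor; the first \<open>s\<close> of them
  form one side of the bipartition.\<close>

definition complete_bipartite_model ::
    "nat \<Rightarrow> nat \<Rightarrow> 'a set \<Rightarrow> 'a set set \<Rightarrow> (nat \<Rightarrow> 'a set) \<Rightarrow> bool" where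
  "complete_bipartite_model s t W F B \<longleftrightarrow>
     (\<forall>i<s + t. B i \<subseteq> W \<and> connected_set F (B i)) \<and>
     (\<forall>i<s + t. \<forall>j<s + t. i \<noteq> j \<longrightarrow> B i \<inter> B j = {}) \<and>
     (\<forall>i<s. \<forall>j. s \<le> j \<longrightarrow> j < s + t \<longrightarrow> joined F (B i) (B j))"

lemma connected_set_uncontract:
  assumes B: "connected_set F B" and "r \<notin> B" and ar: "{a, r} \<in> F'"
    and lift: "\<And>x y. {x, y} \<in> F \<Longrightarrow>
      {x, y} \<in> F' \<or> (x = a \<and> {r, y} \<in> F') \<or> (y = a \<and> {x, r} \<in> F')"
  shows "connected_set F' (if a \<in> B then insert r B else B)"
proof (cases "a \<in> B")
  case False
  have "connected_set F' B" unfolding connected_set_def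
  proof (intro conjI allI impI)
    show "B \<noteq> {}" using B unfolding connected_set_def by simp
    fix S assume S: "S \<subseteq> B" "S \<noteq> {}" "S \<noteq> B"
    then obtain x y where "x \<in> S" "y \<in> B - S" "{x, y} \<in> F"
      using B unfolding connected_set_def by blast
    moreover from this have "x \<noteq> a" "y \<noteq> a" using False S by auto
    ultimately show "\<exists>x\<in>S. \<exists>y\<in>B - S. {x, y} \<in> F'" using lift by blast
  qed
  then show ?thesis using False by simp
next
  case True
  have ra: "{r, a} \<in> F'" using ar by (rule edge_sym)
  have "connected_set F' (insert r B)" unfolding connected_set_def
  proof (intro conjI allI impI)
    fix S assume S: "S \<subseteq> insert r B" "S \<noteq> {}" "S \<noteq> insert r B"
    show "\<exists>x\<in>S. \<exists>y\<in>insert r B - S. {x, y} \<in> F'"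
    proof (cases "S - {r} = {} \<or> S - {r} = B")
      case True
      then have "S = {r} \<or> S = B" using S \<open>r \<notin> B\<close> by auto
      then show ?thesis using ar ra \<open>a \<in> B\<close> \<open>r \<notin> B\<close> by auto
    next
      case False
      then obtain x y where xy: "x \<in> S - {r}" "y \<in> B - (S - {r})" "{x, y} \<in> F"
        using B S unfolding connected_set_def by (metis Diff_subset_conv insert_is_Un)
      then have x: "x \<in> S" and y: "y \<in> insert r B - S" using \<open>r \<notin> B\<close> by auto
      from lift[OF xy(3)] show ?thesis
      proof (elim disjE conjE)
        assume "x = a" "{r, y} \<in> F'"
        then show ?thesis using x y ar by (cases "r \<in> S") auto
      next
        assume "y = a" "{x, r} \<in> F'"
        then show ?thesis using x y ra by (cases "r \<in> S") auto
      qed (use x y in blast)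
    qed
  qed simp
  then show ?thesis using True by simp
qed

context
  fixes s t :: nat and W :: "'a set" and F :: "'a set set" and B :: "nat \<Rightarrow> 'a set"
  assumes model: "complete_bipartite_model s t W F B"
begin

lemma model_subset: "i < s + t \<Longrightarrow> B i \<subseteq> W"
  using model unfolding complete_bipartite_model_def by blast

lemma model_connected: "i < s + t \<Longrightarrow> connected_set F (B i)"
  using model unfolding complete_bipartite_model_def by blast

lemma model_disjoint: "i < s + t \<Longrightarrow> j < s + t \<Longrightarrow> i \<noteq> j \<Longrightarrow> B i \<inter> B j = {}"
  using model unfolding complete_bipartite_model_def by blast

lemma model_joined: "i < s \<Longrightarrow> s \<le> j \<Longrightarrow> j < s + t \<Longrightarrow> \<exists>x\<in>B i. \<exists>y\<in>B j. {x, y} \<in> F"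
  using model unfolding complete_bipartite_model_def joined_def by blast

lemma model_mono:
  assumes "W \<subseteq> W'" "F \<subseteq> F'"
  shows "complete_bipartite_model s t W' F' B"
  unfolding complete_bipartite_model_def joined_def
proof (intro conjI allI impI)
  fix i assume "i < s + t"
  then show "B i \<subseteq> W'" "connected_set F' (B i)"
    using model_subset model_connected connected_set_mono assms by blast+
next
  fix i j assume "i < s" "s \<le> j" "j < s + t"
  then show "\<exists>x\<in>B i. \<exists>y\<in>B j. {x, y} \<in> F'" using model_joined assms by blast
qed (use model_disjoint in blast)

lemma model_contract:
  assumes i: "i < s + t" and uw: "u \<in> B i" "w \<in> B i" "u \<noteq> w"
  shows "complete_bipartite_model s t (W - {w}) (snd (contract_edge u w (W, F))) (\<lambda>j. B j - {w})"
proof -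
  have wj: "w \<in> B j \<longrightarrow> u \<in> B j" if "j < s + t" for j
    using model_disjoint[OF i that] uw by (cases "j = i") auto
  show ?thesis unfolding complete_bipartite_model_def
  proof (intro conjI allI impI)
    fix j assume j: "j < s + t"
    show "B j - {w} \<subseteq> W - {w}" using model_subset[OF j] by auto
    show "connected_set (snd (contract_edge u w (W, F))) (B j - {w})"
      using connected_set_contract[OF model_connected[OF j] wj[OF j] uw(3)] wj[OF j] uw by auto
  next
    fix j k assume "j < s + t" "k < s + t" "j \<noteq> k"
    then show "(B j - {w}) \<inter> (B k - {w}) = {}" using model_disjoint by blast
  next
    fix j k assume jk: "j < s" "s \<le> k" "k < s + t"
    then obtain x y where xy: "x \<in> B j" "y \<in> B k" "{x, y} \<in> F"
      using model_joined by blast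
    have "j < s + t" using jk by simp
    then have "contract_map u w x \<in> B j - {w}" "contract_map u w y \<in> B k - {w}"
      using xy wj jk(3) uw(3) unfolding contract_map_def by auto
    moreover have "B j \<inter> B k = {}" using model_disjoint \<open>j < s + t\<close> jk by auto
    ultimately have "contract_map u w x \<noteq> contract_map u w y" by auto
    with \<open>contract_map u w x \<in> B j - {w}\<close> \<open>contract_map u w y \<in> B k - {w}\<close> show "joined (snd (contract_edge u w (W, F))) (B j - {w}) (B k - {w})"
      unfolding joined_def using contract_map_image_edge[OF xy(3)] by blast
  qed
qed

text \<open>Undoing the contraction of an edge \<open>{a, r}\<close>: \<open>r\<close> joins the branch set of \<open>a\<close>, and
  it supplies every edge \<open>{a, x}\<close> that the contraction created.\<close>

lemma model_uncontract:
  assumes "r \<notin> W" "W \<subseteq> W'" "r \<in> W'"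
    and ar: "{a, r} \<in> F'" and rA: "\<forall>x\<in>A. {r, x} \<in> F'"
    and FF': "F \<subseteq> F' \<union> {{a, x} | x. x \<in> A}"
  shows "complete_bipartite_model s t W' F' (\<lambda>i. if a \<in> B i then insert r (B i) else B i)"
proof -
  let ?B = "\<lambda>i. if a \<in> B i then insert r (B i) else B i"
  have lift: "{x, y} \<in> F' \<or> (x = a \<and> {r, y} \<in> F') \<or> (y = a \<and> {x, r} \<in> F')"
    if "{x, y} \<in> F" for x y
  proof -
    have "{x, y} \<in> F' \<or> (\<exists>z\<in>A. {x, y} = {a, z})" using that FF' by blast
    moreover have "{r, z} \<in> F'" "{z, r} \<in> F'" if "z \<in> A" for z
      using rA that by (auto simp: insert_commute)
    ultimately show ?thesis by (auto simp: doubleton_eq_iff)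
  qed
  have rB: "r \<notin> B i" if "i < s + t" for i using model_subset[OF that] \<open>r \<notin> W\<close> by auto
  show ?thesis unfolding complete_bipartite_model_def
  proof (intro conjI allI impI)
    fix i assume i: "i < s + t"
    show "?B i \<subseteq> W'" using model_subset[OF i] assms by auto
    show "connected_set F' (?B i)"
      using connected_set_uncontract[OF model_connected[OF i] rB[OF i] ar] lift by blast
  next
    fix i j assume "i < s + t" "j < s + t" "i \<noteq> j"
    then have "B i \<inter> B j = {}" "r \<notin> B i" "r \<notin> B j" using model_disjoint rB by simp_all
    then show "?B i \<inter> ?B j = {}" by auto
  next
    fix i j assume "i < s" "s \<le> j" "j < s + t"
    then obtain x y where xy: "x \<in> B i" "y \<in> B j" "{x, y} \<in> F" using model_joined by blast
    from lift[OF xy(3)] show "joined F' (?B i) (?B j)"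
    proof (elim disjE conjE)
      assume "x = a" "{r, y} \<in> F'"
      moreover have "r \<in> ?B i" "y \<in> ?B j" using xy \<open>x = a\<close> by auto
      ultimately show ?thesis unfolding joined_def by blast
    next
      assume "y = a" "{x, r} \<in> F'"
      moreover have "x \<in> ?B i" "r \<in> ?B j" using xy \<open>y = a\<close> by auto
      ultimately show ?thesis unfolding joined_def by blast
    qed (use xy in \<open>auto simp: joined_def\<close>)
  qed
qed

end

lemma complete_bipartite_model_singletons:
  "simple_graph V E \<Longrightarrow> complete_bipartite_model s t V E B \<Longrightarrow>
    \<exists>V' E' b. minor (V, E) (V', E') \<and> simple_graph V' E' \<and>
      complete_bipartite_model s t V' E' (\<lambda>i. {b i})"
proof (induction "\<Sum>i<s + t. card (B i)" arbitrary: V E B rule: less_induct)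
  case less
  note G = less.prems(1) and model = less.prems(2)
  show ?case
  proof (cases "\<forall>i<s + t. \<exists>b. B i = {b}")
    case True
    define b where "b i = the_elem (B i)" for i
    have b: "\<forall>i<s + t. B i = {b i}" using True unfolding b_def by fastforce
    have "complete_bipartite_model s t V E (\<lambda>i. {b i})"
      unfolding complete_bipartite_model_def joined_def
    proof (intro conjI allI impI)
      fix i assume "i < s + t"
      then show "{b i} \<subseteq> V" "connected_set E {b i}" using model_subset[OF model] b by auto
    next
      fix i j assume "i < s + t" "j < s + t" "i \<noteq> j"
      then show "{b i} \<inter> {b j} = {}" using model_disjoint[OF model] b by metis
    next
      fix i j assume "i < s" "s \<le> j" "j < s + t"
      then show "\<exists>x\<in>{b i}. \<exists>y\<in>{b j}. {x, y} \<in> E" using model_joined[OF model] b by simp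
    qed
    then show ?thesis using G minor.refl by blast
  next
    case False
    then obtain i where i: "i < s + t" "\<nexists>b. B i = {b}" by blast
    obtain u where u: "u \<in> B i"
      using model_connected[OF model i(1)] unfolding connected_set_def by blast
    obtain w where w: "w \<in> B i" "w \<noteq> u" "{u, w} \<in> E"
      using connected_set_has_edge[OF model_connected[OF model i(1)] u] i(2) by blast
    have fin: "finite (B j)" if "j < s + t" for j
      using model_subset[OF model that] G finite_subset unfolding simple_graph_def by blast
    let ?G = "contract_edge u w (V, E)"
    have "minor (V, E) ?G" using minor.contract[OF minor.refl[of "(V, E)"], of u w] w by simp
    then have m1: "minor (V, E) (V - {w}, snd ?G)" by (simp add: contract_edge_eq)
    have G1: "simple_graph (V - {w}) (snd ?G)"
      using simple_graph_contract[OF G _ w(2)[symmetric]] model_subset[OF model i(1)] u by blast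
    have model1: "complete_bipartite_model s t (V - {w}) (snd ?G) (\<lambda>j. B j - {w})"
      using model_contract[OF model i(1) u w(1)] w(2) by simp
    have "(\<Sum>j<s + t. card (B j - {w})) < (\<Sum>j<s + t. card (B j))"
    proof (rule sum_strict_mono_ex1)
      show "\<forall>j\<in>{..<s + t}. card (B j - {w}) \<le> card (B j)"
        using fin by (auto intro: card_mono)
      show "\<exists>j\<in>{..<s + t}. card (B j - {w}) < card (B j)"
        using card_Diff1_less[OF fin[OF i(1)] w(1)] i(1) by blast
    qed simp
    from less.hyps[OF this G1 model1] obtain V' E' b where
      "minor (V - {w}, snd ?G) (V', E')" "simple_graph V' E'"
      "complete_bipartite_model s t V' E' (\<lambda>i. {b i})"
      by blast
    moreover from this(1) have "minor (V, E) (V', E')" by (rule minor_trans[OF _ m1])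
    ultimately show ?thesis by blast
  qed
qed

lemma not_K33_minor_free_if_model:
  assumes "simple_graph V E" "complete_bipartite_model 3 3 V E B"
  shows "\<not> K33_minor_free V E"
proof -
  obtain V' E' b where r: "minor (V, E) (V', E')" "simple_graph V' E'"
    and model: "complete_bipartite_model 3 3 V' E' (\<lambda>i. {b i})"
    using complete_bipartite_model_singletons[OF assms] by blast
  have bd: "b i \<noteq> b j" if "i < 6" "j < 6" "i \<noteq> j" for i j
    using model_disjoint[OF model, of i j] that by auto
  have bV: "b i \<in> V'" if "i < 6" for i using model_subset[OF model, of i] that by auto
  have badj: "{b i, b j} \<in> E'" if "i < 3" "3 \<le> j" "j < 6" for i j
    using model_joined[OF model, of i j] that by auto
  define X where "X = {b 0, b 1, b 2}"
  define Y where "Y = {b 3, b 4, b 5}"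
  define T where "T = {{x, y} | x y. x \<in> X \<and> y \<in> Y}"
  have TE: "T \<subseteq> E'" unfolding T_def X_def Y_def
    using badj[of 0 3] badj[of 0 4] badj[of 0 5] badj[of 1 3] badj[of 1 4] badj[of 1 5]
      badj[of 2 3] badj[of 2 4] badj[of 2 5] by auto
  have XY: "X \<union> Y \<subseteq> V'" unfolding X_def Y_def
    using bV[of 0] bV[of 1] bV[of 2] bV[of 3] bV[of 4] bV[of 5] by auto
  have "minor (V', E') (V', E' - (E' - T))"
    using simple_graph_finite_edges[OF r(2)] by (intro minor_delete_edges) auto
  moreover have "E' - (E' - T) = T" using TE by auto
  ultimately have m1: "minor (V', E') (V', T)" by simp
  have "minor (V', T) (V' - (V' - (X \<union> Y)), T)"
  proof (rule minor_delete_isolated_vertices)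
    show "finite (V' - (X \<union> Y))" using r(2) unfolding simple_graph_def by simp
    show "\<forall>e\<in>T. e \<inter> (V' - (X \<union> Y)) = {}" unfolding T_def by auto
  qed simp
  moreover have "V' - (V' - (X \<union> Y)) = X \<union> Y" using XY by auto
  ultimately have "minor (V', T) (X \<union> Y, T)" by simp
  then have "minor (V, E) (X \<union> Y, T)" using minor_trans[OF _ minor_trans[OF m1 r(1)]] by blast
  moreover have "is_K33 (X \<union> Y, T)"
    unfolding is_K33_def
  proof (intro exI conjI)
    show "X \<inter> Y = {}" unfolding X_def Y_def
      using bd[of 0 3] bd[of 0 4] bd[of 0 5] bd[of 1 3] bd[of 1 4] bd[of 1 5]
        bd[of 2 3] bd[of 2 4] bd[of 2 5] by auto
    show "card X = 3" unfolding X_def using bd[of 0 1] bd[of 0 2] bd[of 1 2] by simp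
    show "card Y = 3" unfolding Y_def using bd[of 3 4] bd[of 3 5] bd[of 4 5] by simp
  qed (simp_all add: T_def)
  ultimately show ?thesis unfolding K33_minor_free_def by blast
qed

lemma less_5_cases: "(i::nat) < 5 \<Longrightarrow> i = 0 \<or> i = 1 \<or> i = 2 \<or> i = 3 \<or> i = 4"
  by auto

lemma less_6_cases: "(i::nat) < 6 \<Longrightarrow> i = 0 \<or> i = 1 \<or> i = 2 \<or> i = 3 \<or> i = 4 \<or> i = 5"
  by auto

lemma ex_K23_modelI:
  assumes "B0 \<subseteq> W" "B1 \<subseteq> W" "B2 \<subseteq> W" "B3 \<subseteq> W" "B4 \<subseteq> W"
    and "connected_set F B0" "connected_set F B1" "connected_set F B2" "connected_set F B3"
      "connected_set F B4"
    and "B0 \<inter> B1 = {}" "B0 \<inter> B2 = {}" "B0 \<inter> B3 = {}" "B0 \<inter> B4 = {}"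
      "B1 \<inter> B2 = {}" "B1 \<inter> B3 = {}" "B1 \<inter> B4 = {}"
      "B2 \<inter> B3 = {}" "B2 \<inter> B4 = {}" "B3 \<inter> B4 = {}"
    and "joined F B0 B2" "joined F B0 B3" "joined F B0 B4"
      "joined F B1 B2" "joined F B1 B3" "joined F B1 B4"
  shows "\<exists>B. complete_bipartite_model 2 3 W F B"
proof
  let ?B = "\<lambda>i. [B0, B1, B2, B3, B4] ! i"
  show "complete_bipartite_model 2 3 W F ?B" unfolding complete_bipartite_model_def
  proof (intro conjI allI impI)
    fix i :: nat assume "i < 2 + 3"
    then show "?B i \<subseteq> W" "connected_set F (?B i)"
      using assms less_5_cases[of i] by (auto simp del: One_nat_def)
  next
    fix i j :: nat assume "i < 2 + 3" "j < 2 + 3" "i \<noteq> j"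
    then show "?B i \<inter> ?B j = {}"
      using assms less_5_cases[of i] less_5_cases[of j] by (auto simp del: One_nat_def)
  next
    fix i j :: nat assume "i < 2" "2 \<le> j" "j < 2 + 3"
    then show "joined F (?B i) (?B j)"
      using assms less_5_cases[of j] by (auto simp: less_2_cases_iff simp del: One_nat_def)
  qed
qed

lemma ex_K33_modelI:
  assumes "B0 \<subseteq> W" "B1 \<subseteq> W" "B2 \<subseteq> W" "B3 \<subseteq> W" "B4 \<subseteq> W" "B5 \<subseteq> W"
    and "connected_set F B0" "connected_set F B1" "connected_set F B2" "connected_set F B3"
      "connected_set F B4" "connected_set F B5"
    and "B0 \<inter> B1 = {}" "B0 \<inter> B2 = {}" "B0 \<inter> B3 = {}" "B0 \<inter> B4 = {}" "B0 \<inter> B5 = {}"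
      "B1 \<inter> B2 = {}" "B1 \<inter> B3 = {}" "B1 \<inter> B4 = {}" "B1 \<inter> B5 = {}"
      "B2 \<inter> B3 = {}" "B2 \<inter> B4 = {}" "B2 \<inter> B5 = {}"
      "B3 \<inter> B4 = {}" "B3 \<inter> B5 = {}" "B4 \<inter> B5 = {}"
    and "joined F B0 B3" "joined F B0 B4" "joined F B0 B5"
      "joined F B1 B3" "joined F B1 B4" "joined F B1 B5"
      "joined F B2 B3" "joined F B2 B4" "joined F B2 B5"
  shows "\<exists>B. complete_bipartite_model 3 3 W F B"
proof
  let ?B = "\<lambda>i. [B0, B1, B2, B3, B4, B5] ! i"
  show "complete_bipartite_model 3 3 W F ?B" unfolding complete_bipartite_model_def
  proof (intro conjI allI impI)
    fix i :: nat assume "i < 3 + 3"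
    then show "?B i \<subseteq> W" "connected_set F (?B i)"
      using assms less_6_cases[of i] by (auto simp del: One_nat_def)
  next
    fix i j :: nat assume "i < 3 + 3" "j < 3 + 3" "i \<noteq> j"
    then show "?B i \<inter> ?B j = {}"
      using assms less_6_cases[of i] less_6_cases[of j] by (auto simp del: One_nat_def)
  next
    fix i j :: nat assume "i < 3" "3 \<le> j" "j < 3 + 3"
    then show "joined F (?B i) (?B j)"
      using assms less_6_cases[of i] less_6_cases[of j] by (auto simp del: One_nat_def)
  qed
qed

lemma joined_singletons: "{x, y} \<in> F \<Longrightarrow> joined F {x} {y}"
  unfolding joined_def by auto

lemma card_common_neighbors_le_2_if_no_K23:
  assumes G: "simple_graph W F" and no_K23: "\<nexists>B. complete_bipartite_model 2 3 W F B"
    and "u \<in> W" "x \<in> W" "u \<noteq> x"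
  shows "card (neighbors F u \<inter> neighbors F x) \<le> 2"
proof (rule ccontr)
  assume "\<not> ?thesis"
  then have "3 \<le> card (neighbors F u \<inter> neighbors F x)" by simp
  then obtain a b c where abc: "a \<in> neighbors F u \<inter> neighbors F x"
    "b \<in> neighbors F u \<inter> neighbors F x" "c \<in> neighbors F u \<inter> neighbors F x"
    "a \<noteq> b" "a \<noteq> c" "b \<noteq> c"
    by (rule card_ge_3E)
  then have "u \<noteq> a" "u \<noteq> b" "u \<noteq> c" "x \<noteq> a" "x \<noteq> b" "x \<noteq> c"
    using not_in_neighbors_self[OF G] by blast+
  moreover have "a \<in> W" "b \<in> W" "c \<in> W" using abc neighbors_subset[OF G] by blast+
  ultimately have "\<exists>B. complete_bipartite_model 2 3 W F B"
    using abc assms(3-5)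
    by (intro ex_K23_modelI[of "{u}" _ "{x}" "{a}" "{b}" "{c}"])
      (auto simp: joined_singletons in_neighbors_iff)
  then show False using no_K23 by blast
qed

lemma card_common_neighbors_le_2_if_no_K33:
  assumes G: "simple_graph W F" and no_K33: "\<nexists>B. complete_bipartite_model 3 3 W F B"
    and "u \<in> W" "v \<in> W" "w \<in> W" "u \<noteq> v" "u \<noteq> w" "v \<noteq> w"
  shows "card (neighbors F u \<inter> neighbors F v \<inter> neighbors F w) \<le> 2"
proof (rule ccontr)
  let ?C = "neighbors F u \<inter> neighbors F v \<inter> neighbors F w"
  assume "\<not> ?thesis"
  then have "3 \<le> card ?C" by simp
  then obtain a b c where abc: "a \<in> ?C" "b \<in> ?C" "c \<in> ?C" "a \<noteq> b" "a \<noteq> c" "b \<noteq> c"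
    by (rule card_ge_3E)
  then have "u \<noteq> a" "u \<noteq> b" "u \<noteq> c" "v \<noteq> a" "v \<noteq> b" "v \<noteq> c" "w \<noteq> a" "w \<noteq> b" "w \<noteq> c"
    using not_in_neighbors_self[OF G] by blast+
  moreover have "a \<in> W" "b \<in> W" "c \<in> W" using abc neighbors_subset[OF G] by blast+
  ultimately have "\<exists>B. complete_bipartite_model 3 3 W F B"
    using abc assms(3-8)
    by (intro ex_K33_modelI[of "{u}" _ "{v}" "{w}" "{a}" "{b}" "{c}"])
      (auto simp: joined_singletons in_neighbors_iff)
  then show False using no_K33 by blast
qed

lemma ex_K33_model_apex:
  assumes model: "complete_bipartite_model 2 3 W F B" and "F \<subseteq> E" "W \<subseteq> V" "v \<in> V"
    and v: "\<forall>i<5. v \<notin> B i" "\<forall>j\<in>{2..<5}. joined E {v} (B j)"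
  shows "\<exists>B'. complete_bipartite_model 3 3 V E B'"
proof (rule ex_K33_modelI[of "B 0" V "B 1" "{v}" "B 2" "B 3" "B 4"])
  have "B i \<subseteq> V" "connected_set E (B i)" if "i < 5" for i
    using model_subset[OF model, of i] connected_set_mono[OF model_connected[OF model, of i]]
      that assms(2,3) by auto
  then show "B 0 \<subseteq> V" "B 1 \<subseteq> V" "{v} \<subseteq> V" "B 2 \<subseteq> V" "B 3 \<subseteq> V" "B 4 \<subseteq> V"
    "connected_set E (B 0)" "connected_set E (B 1)" "connected_set E {v}"
    "connected_set E (B 2)" "connected_set E (B 3)" "connected_set E (B 4)"
    using \<open>v \<in> V\<close> by auto
  have "B i \<inter> B j = {}" if "i < 5" "j < 5" "i \<noteq> j" for i j
    using model_disjoint[OF model] that by simp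
  then show "B 0 \<inter> B 1 = {}" "B 0 \<inter> {v} = {}" "B 0 \<inter> B 2 = {}" "B 0 \<inter> B 3 = {}"
    "B 0 \<inter> B 4 = {}" "B 1 \<inter> {v} = {}" "B 1 \<inter> B 2 = {}" "B 1 \<inter> B 3 = {}" "B 1 \<inter> B 4 = {}"
    "{v} \<inter> B 2 = {}" "{v} \<inter> B 3 = {}" "{v} \<inter> B 4 = {}"
    "B 2 \<inter> B 3 = {}" "B 2 \<inter> B 4 = {}" "B 3 \<inter> B 4 = {}"
    using v(1) by auto
  have "joined E (B i) (B j)" if "i < 2" "2 \<le> j" "j < 5" for i j
    using model_joined[OF model, of i j] that \<open>F \<subseteq> E\<close> unfolding joined_def by auto
  then show "joined E (B 0) (B 2)" "joined E (B 0) (B 3)" "joined E (B 0) (B 4)"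
    "joined E (B 1) (B 2)" "joined E (B 1) (B 3)" "joined E (B 1) (B 4)"
    "joined E {v} (B 2)" "joined E {v} (B 3)" "joined E {v} (B 4)"
    using v(2) by auto
qed

section \<open>Edge density of graphs without a \<open>K\<^sub>2\<^sub>,\<^sub>3\<close> minor\<close>

lemma even_card_neighbors_if_2_regular:
  assumes G: "simple_graph W F" and K: "K \<subseteq> W" "y \<notin> K"
    and two: "\<forall>p\<in>K. card (neighbors F p \<inter> insert y K) = 2"
  shows "even (card (neighbors F y \<inter> K))"
proof -
  have fK: "finite K" using K(1) G finite_subset unfolding simple_graph_def by blast
  have "2 * card K = (\<Sum>p\<in>K. card (neighbors F p \<inter> insert y K))" using two by simp
  also have "\<dots> = (\<Sum>p\<in>K. card (neighbors F p \<inter> K) + card (neighbors F p \<inter> {y}))"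
  proof (rule sum.cong)
    fix p assume "p \<in> K"
    have "neighbors F p \<inter> insert y K = (neighbors F p \<inter> K) \<union> (neighbors F p \<inter> {y})" by auto
    then show "card (neighbors F p \<inter> insert y K) = card (neighbors F p \<inter> K) + card (neighbors F p \<inter> {y})"
      using K(2) finite_neighbors[OF G] by (simp only:) (subst card_Un_disjoint, auto)
  qed simp
  also have "\<dots> = (\<Sum>p\<in>K. card (neighbors F p \<inter> K)) + (\<Sum>p\<in>K. card (neighbors F p \<inter> {y}))"
    by (rule sum.distrib)
  also have "(\<Sum>p\<in>K. card (neighbors F p \<inter> K)) = 2 * card {e \<in> F. e \<subseteq> K}"
    using sum_card_neighbors_inside[OF G K(1)] .
  also have "(\<Sum>p\<in>K. card (neighbors F p \<inter> {y})) = (\<Sum>p\<in>K. if p \<in> neighbors F y then 1 else 0)"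
    by (rule sum.cong) (use neighbors_sym[of y F] in auto)
  also have "\<dots> = card {p \<in> K. p \<in> neighbors F y}"
    using fK by (simp add: sum.inter_filter[symmetric])
  also have "{p \<in> K. p \<in> neighbors F y} = neighbors F y \<inter> K" by auto
  finally show ?thesis by presburger
qed

lemma connected_set_component_joined:
  assumes K: "connected_set F K" and K0: "K0 \<subseteq> K - N" "K0 \<noteq> {}" and "K \<inter> N \<noteq> {}"
    and closed: "\<forall>p\<in>K0. \<forall>q\<in>(K - N) - K0. {p, q} \<notin> F"
  shows "\<exists>q\<in>K0. \<exists>s\<in>K \<inter> N. {q, s} \<in> F"
proof -
  have "K0 \<subseteq> K" "K0 \<noteq> K" using K0 \<open>K \<inter> N \<noteq> {}\<close> by auto
  then obtain q s where qs: "q \<in> K0" "s \<in> K - K0" "{q, s} \<in> F"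
    using K K0(2) unfolding connected_set_def by blast
  have "s \<in> N"
  proof (rule ccontr)
    assume "s \<notin> N"
    then have "s \<in> (K - N) - K0" using qs(2) by blast
    then show False using closed qs(1,3) by blast
  qed
  then show ?thesis using qs by blast
qed

definition one_separable :: "'a set \<Rightarrow> 'a set set \<Rightarrow> bool" where
  "one_separable W F \<longleftrightarrow> (\<exists>W1 W2. W1 \<union> W2 = W \<and> card (W1 \<inter> W2) \<le> 1 \<and>
     W1 - W2 \<noteq> {} \<and> W2 - W1 \<noteq> {} \<and> (\<forall>x\<in>W1 - W2. \<forall>y\<in>W2 - W1. {x, y} \<notin> F))"

text \<open>A component of \<open>W - {u} - T\<close> that has no edge to \<open>T\<close> would be cut off by \<open>u\<close> alone.\<close>

lemma closed_set_joined_if_not_one_separable: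
  assumes not_sep: "\<not> one_separable W F" and u: "u \<in> W"
    and K: "K \<subseteq> W - {u} - T" "K \<noteq> {}" and T: "T \<subseteq> W - {u}" "T \<noteq> {}"
    and closed: "\<forall>p\<in>K. \<forall>q\<in>(W - {u} - T) - K. {p, q} \<notin> F"
  shows "\<exists>p\<in>K. \<exists>a\<in>T. {p, a} \<in> F"
proof (rule ccontr)
  assume no_edge: "\<not> (\<exists>p\<in>K. \<exists>a\<in>T. {p, a} \<in> F)"
  have "one_separable W F" unfolding one_separable_def
  proof (intro exI conjI)
    show "insert u K \<union> (W - K) = W" using K u by auto
    have "insert u K \<inter> (W - K) = {u}" using K u by auto
    then show "card (insert u K \<inter> (W - K)) \<le> 1" by simp
    show "insert u K - (W - K) \<noteq> {}" using K by auto
    show "W - K - insert u K \<noteq> {}" using K T by blast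
    show "\<forall>p\<in>insert u K - (W - K). \<forall>q\<in>W - K - insert u K. {p, q} \<notin> F"
      using no_edge closed K u by blast
  qed
  then show False using not_sep by blast
qed

context
  fixes W :: "'a set" and F :: "'a set set" and u :: 'a
  assumes G: "simple_graph W F" and no_K23: "\<nexists>B. complete_bipartite_model 2 3 W F B"
    and u: "u \<in> W"
    and two_regular: "\<forall>x\<in>neighbors F u. card (neighbors F x \<inter> neighbors F u) = 2"
begin

text \<open>If \<open>y, y'\<close> were not adjacent, follow the cycle of \<open>neighbors F u\<close> through \<open>y\<close>: the
  component \<open>K\<close> of its next vertex \<open>z\<close> away from \<open>x, y, y'\<close> either reaches \<open>y'\<close>, giving a \<open>K\<^sub>2\<^sub>,\<^sub>3\<close> with sides
  \<open>{x}, K\<close> and \<open>{y}, {y'}, {u}\<close>, or is joined to the rest of the neighbourhood by the single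
  edge \<open>{y, z}\<close>, which makes its degree sum odd.\<close>

lemma neighbors_of_neighbor_adjacent:
  assumes x: "x \<in> neighbors F u" and xy: "neighbors F x \<inter> neighbors F u = {y, y'}" "y \<noteq> y'"
  shows "{y, y'} \<in> F"
proof (rule ccontr)
  assume yy': "{y, y'} \<notin> F"
  define N where "N = neighbors F u"
  have fN: "finite N" and NW: "N \<subseteq> W" and uN: "u \<notin> N"
    unfolding N_def using finite_neighbors[OF G] neighbors_subset[OF G] not_in_neighbors_self[OF G]
    by auto
  have yN: "y \<in> N" "y' \<in> N" using xy unfolding N_def by auto
  have "x \<in> neighbors F y \<inter> N" using xy x neighbors_sym unfolding N_def by fastforce
  then obtain z where z: "z \<noteq> x" "neighbors F y \<inter> N = {x, z}"
    using two_regular yN(1) unfolding N_def by (metis card_2_iff doubleton_eq_iff insertE singletonD)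
  then have zN: "z \<in> N" and yz: "{y, z} \<in> F" by (auto simp: in_neighbors_iff)
  have "z \<noteq> y" "z \<noteq> y'" using edge_endpoints(3)[OF G yz] yz yy' by auto
  define S where "S = N - {x, y, y'}"
  have "finite S" "z \<in> S" unfolding S_def using zN z \<open>z \<noteq> y\<close> \<open>z \<noteq> y'\<close> fN by auto
  then obtain K where K: "K \<subseteq> S" "z \<in> K" "connected_set F K"
    and closed: "\<forall>p\<in>K. \<forall>q\<in>S - K. {p, q} \<notin> F"
    by (rule connected_componentE)
  have KN: "K \<subseteq> N" and xK: "x \<notin> K" "y \<notin> K" "y' \<notin> K" and uK: "u \<notin> K"
    using K(1) uN unfolding S_def by auto
  have xN: "x \<in> N" using x unfolding N_def .
  have xy_edges: "{x, y} \<in> F" "{x, y'} \<in> F" using xy by (auto simp: in_neighbors_iff)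
  have xny: "x \<noteq> y" "x \<noteq> y'" using edge_endpoints(3)[OF G] xy_edges by auto
  show False
  proof (cases "\<exists>p\<in>K. {p, y'} \<in> F")
    case True
    then obtain p where p: "p \<in> K" "{p, y'} \<in> F" by blast
    have "joined F {x} {u}" "joined F K {u}" "joined F K {y}" "joined F K {y'}"
      using xN zN K(2) p yz unfolding joined_def N_def by (auto simp: in_neighbors_iff insert_commute)
    then have "\<exists>B. complete_bipartite_model 2 3 W F B"
      using xN KN yN NW u K(3) xK uK xny xy(2) uN xy_edges
      by (intro ex_K23_modelI[of "{x}" W K "{y}" "{y'}" "{u}"])
        (auto simp: joined_singletons)
    then show False using no_K23 by blast
  next
    case False
    have "neighbors F p \<inter> N = neighbors F p \<inter> insert y K" if p: "p \<in> K" for p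
    proof -
      have "q \<in> K \<or> q = y" if q: "q \<in> neighbors F p \<inter> N" for q
      proof -
        have "q \<noteq> x"
        proof
          assume "q = x"
          then have "p \<in> neighbors F x \<inter> N" using q p KN neighbors_sym by fastforce
          then show False using xy xK p unfolding N_def by auto
        qed
        moreover have "q \<noteq> y'" using False p q by (auto simp: in_neighbors_iff)
        moreover have "q \<in> S \<longrightarrow> q \<in> K" using closed p q by (auto simp: in_neighbors_iff)
        ultimately show ?thesis using q unfolding S_def by auto
      qed
      then show ?thesis using KN yN by auto
    qed
    then have "\<forall>p\<in>K. card (neighbors F p \<inter> insert y K) = 2"
      using two_regular KN unfolding N_def by (metis subsetD)
    then have "even (card (neighbors F y \<inter> K))"
      using even_card_neighbors_if_2_regular[OF G _ xK(2)] K(1) NW unfolding S_def by blast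
    moreover have "neighbors F y \<inter> K = {z}" using z K(2) KN xK by auto
    ultimately show False by simp
  qed
qed

lemma neighborhood_triangle_closed:
  assumes x: "x \<in> neighbors F u" and xy: "neighbors F x \<inter> neighbors F u = {y, y'}" "y \<noteq> y'"
    and yy': "{y, y'} \<in> F" and a: "a \<in> {x, y, y'}"
  shows "neighbors F a \<inter> neighbors F u = {x, y, y'} - {a}"
proof (rule card_subset_eq[symmetric])
  show "finite (neighbors F a \<inter> neighbors F u)" using finite_neighbors[OF G] by simp
  have T: "{x, y, y'} \<subseteq> neighbors F u" using x xy by auto
  have xe: "{x, y} \<in> F" "{x, y'} \<in> F" using xy by (auto simp: in_neighbors_iff)
  show "{x, y, y'} - {a} \<subseteq> neighbors F a \<inter> neighbors F u"
    using a T xe yy' by (auto simp: in_neighbors_iff insert_commute)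
  have "x \<noteq> y" "x \<noteq> y'" using xy not_in_neighbors_self[OF G, of x] by auto
  then show "card ({x, y, y'} - {a}) = card (neighbors F a \<inter> neighbors F u)"
    using two_regular a T xy(2) by auto
qed

text \<open>Suppose the neighbourhood had a vertex \<open>w\<close> outside the triangle \<open>T = {x, y, y'}\<close>, and let
  \<open>K\<close> be its component in the graph without \<open>u\<close> and \<open>T\<close>. Since \<open>u\<close> is no cut vertex, \<open>K\<close> has a
  vertex \<open>p\<close> adjacent to some \<open>a \<in> T\<close>, and \<open>p\<close> lies outside the neighbourhood. The component
  \<open>K\<^sub>0\<close> of \<open>p\<close> in \<open>K\<close> without the neighbourhood is joined to a vertex \<open>s\<close> of the neighbourhood,
  so with \<open>T - {a} = {b, c}\<close> the sets \<open>{u}, insert a K\<^sub>0\<close> and \<open>{b}, {c}, {s}\<close> form a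
  \<open>K\<^sub>2\<^sub>,\<^sub>3\<close>.\<close>

lemma triangle_in_neighborhood:
  assumes x: "x \<in> neighbors F u" and xy: "neighbors F x \<inter> neighbors F u = {y, y'}" "y \<noteq> y'"
    and yy': "{y, y'} \<in> F" and not_sep: "\<not> one_separable W F"
  shows "card (neighbors F u) \<le> 3"
proof (rule ccontr)
  assume "\<not> ?thesis"
  define N where "N = neighbors F u"
  define T where "T = {x, y, y'}"
  have NW: "N \<subseteq> W" and uN: "u \<notin> N" and fW: "finite W"
    using neighbors_subset[OF G] not_in_neighbors_self[OF G] G unfolding N_def simple_graph_def by auto
  have uadj: "{u, q} \<in> F" if "q \<in> N" for q using that unfolding N_def by (simp add: in_neighbors_iff)
  have TN: "T \<subseteq> N" using x xy unfolding T_def N_def by auto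
  have T_closed: "neighbors F a \<inter> N = T - {a}" if "a \<in> T" for a
    unfolding N_def T_def by (rule neighborhood_triangle_closed[OF x xy yy' that[unfolded T_def]])
  have "\<not> N \<subseteq> T"
  proof
    assume "N \<subseteq> T"
    then have "card N \<le> card T" by (simp add: card_mono T_def)
    also have "card T \<le> 3" unfolding T_def by (simp add: card_insert_le_m1)
    finally show False using \<open>\<not> card (neighbors F u) \<le> 3\<close> unfolding N_def by simp
  qed
  then obtain w where w: "w \<in> N" "w \<notin> T" by blast
  define S where "S = W - {u} - T"
  have "finite S" "w \<in> S" unfolding S_def using w NW uN fW by auto
  then obtain K where K: "K \<subseteq> S" "w \<in> K" "connected_set F K"
    and K_closed: "\<forall>p\<in>K. \<forall>q\<in>S - K. {p, q} \<notin> F"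
    by (rule connected_componentE)
  have KW: "K \<subseteq> W" "u \<notin> K" "K \<inter> T = {}" using K(1) unfolding S_def by auto
  have "\<exists>p\<in>K. \<exists>a\<in>T. {p, a} \<in> F"
    using closed_set_joined_if_not_one_separable[OF not_sep u, of K T] K(1,2) K_closed TN NW uN
    unfolding S_def T_def by blast
  then obtain p a where pa: "p \<in> K" "a \<in> T" "{p, a} \<in> F" by blast
  have pN: "p \<notin> N"
  proof
    assume "p \<in> N"
    then have "p \<in> neighbors F a \<inter> N" using pa(3) by (simp add: in_neighbors_iff insert_commute)
    then show False using T_closed[OF pa(2)] pa(1) KW by auto
  qed
  have "finite (K - N)" "p \<in> K - N" using pa(1) pN K(1) \<open>finite S\<close> finite_subset by auto
  then obtain K0 where K0: "K0 \<subseteq> K - N" "p \<in> K0" "connected_set F K0"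
    and K0_closed: "\<forall>p\<in>K0. \<forall>q\<in>(K - N) - K0. {p, q} \<notin> F"
    by (rule connected_componentE)
  have "\<exists>q\<in>K0. \<exists>s\<in>K \<inter> N. {q, s} \<in> F"
    using connected_set_component_joined[OF K(3) K0(1) _ _ K0_closed] K0(2) w K(2) by blast
  then obtain q s where qs: "q \<in> K0" "s \<in> K" "s \<in> N" "{q, s} \<in> F" by blast
  have "a \<in> N" using TN pa(2) by blast
  then have "card (neighbors F a \<inter> N) = 2" using two_regular unfolding N_def by blast
  then have "card (T - {a}) = 2" using T_closed[OF pa(2)] by (simp only:)
  then obtain b c where bc: "T - {a} = {b, c}" "b \<noteq> c" by (meson card_2_iff)
  have "b \<in> T - {a}" "c \<in> T - {a}" using bc(1) by simp_all
  then have bcT: "b \<in> T" "c \<in> T" "a \<noteq> b" "a \<noteq> c" by auto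
  have "b \<in> neighbors F a" "c \<in> neighbors F a"
    using T_closed[OF pa(2)] \<open>b \<in> T - {a}\<close> \<open>c \<in> T - {a}\<close> by blast+
  then have ab: "{a, b} \<in> F" "{a, c} \<in> F" by (simp_all add: in_neighbors_iff)
  have "a \<notin> K0" using KW K0(1) pa(2) by auto
  then have "connected_set F (insert a K0)"
    using connected_set_insert[OF K0(3) _ K0(2) edge_sym[OF pa(3)]] by blast
  moreover have "joined F (insert a K0) {b}" "joined F (insert a K0) {c}" "joined F (insert a K0) {s}"
    using ab qs unfolding joined_def by auto
  moreover have "joined F {u} {b}" "joined F {u} {c}" "joined F {u} {s}"
    using uadj bcT TN qs(3) by (auto simp: joined_singletons)
  ultimately have "\<exists>B. complete_bipartite_model 2 3 W F B"
    using u TN NW K0 KW bcT bc(2) uN pa(2) qs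
    by (intro ex_K23_modelI[of "{u}" W "insert a K0" "{b}" "{c}" "{s}"]) auto
  then show False using no_K23 by blast
qed

end

lemma card_edges_separation:
  assumes G: "simple_graph W F" and W: "W1 \<union> W2 = W" "card (W1 \<inter> W2) \<le> 1"
    and no_cross: "\<forall>x\<in>W1 - W2. \<forall>y\<in>W2 - W1. {x, y} \<notin> F"
  shows "card F = card {e \<in> F. e \<subseteq> W1} + card {e \<in> F. e \<subseteq> W2}"
proof -
  have "e \<subseteq> W1 \<or> e \<subseteq> W2" if eF: "e \<in> F" for e
  proof -
    obtain x y where e: "e = {x, y}" using simple_graph_edgeE[OF G eF] by blast
    then have "x \<in> W" "y \<in> W" "{x, y} \<in> F" "{y, x} \<in> F"
      using edge_endpoints[OF G] eF by (auto simp: insert_commute)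
    then show ?thesis using e W(1) no_cross by blast
  qed
  moreover have "\<not> (e \<subseteq> W1 \<and> e \<subseteq> W2)" if "e \<in> F" for e
  proof
    assume "e \<subseteq> W1 \<and> e \<subseteq> W2"
    moreover have "finite (W1 \<inter> W2)" using G W(1) unfolding simple_graph_def by auto
    ultimately have "card e \<le> card (W1 \<inter> W2)" by (simp add: card_mono)
    then show False using that G W(2) unfolding simple_graph_def by auto
  qed
  ultimately have split: "F = {e \<in> F. e \<subseteq> W1} \<union> {e \<in> F. e \<subseteq> W2}"
    and disjoint: "{e \<in> F. e \<subseteq> W1} \<inter> {e \<in> F. e \<subseteq> W2} = {}" by blast+
  from split have "card F = card ({e \<in> F. e \<subseteq> W1} \<union> {e \<in> F. e \<subseteq> W2})" by (rule arg_cong)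
  also have "\<dots> = card {e \<in> F. e \<subseteq> W1} + card {e \<in> F. e \<subseteq> W2}"
    using simple_graph_finite_edges[OF G] disjoint by (intro card_Un_disjoint) auto
  finally show ?thesis .
qed

text \<open>Contracting \<open>{u, w}\<close> keeps the edges away from \<open>w\<close> and turns each edge \<open>{w, t}\<close> with
  \<open>t\<close> not adjacent to \<open>u\<close> into a new edge \<open>{u, t}\<close>; only \<open>{u, w}\<close> and the edges from \<open>w\<close>
  to common neighbours are lost.\<close>

lemma card_edges_contract:
  assumes G: "simple_graph W F" and uw: "{u, w} \<in> F"
  shows "card F \<le> card (snd (contract_edge u w (W, F))) + 1 + card (neighbors F u \<inter> neighbors F w)"
proof -
  let ?F' = "snd (contract_edge u w (W, F))"
  define X where "X = neighbors F w - neighbors F u - {u}"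
  have u: "u \<in> W" "u \<noteq> w" using edge_endpoints[OF G uw] by auto
  have kept: "{e \<in> F. w \<notin> e} \<subseteq> ?F'"
  proof
    fix e assume e: "e \<in> {e \<in> F. w \<notin> e}"
    then have "card e = 2" using G unfolding simple_graph_def by blast
    with e show "e \<in> ?F'" unfolding contract_edge_eq using contract_map_image_fixed[of w e u] by auto
  qed
  have new: "(\<lambda>t. {u, t}) ` X \<subseteq> ?F'"
  proof
    fix e assume "e \<in> (\<lambda>t. {u, t}) ` X"
    then obtain t where "t \<in> X" and t: "e = {u, t}" by blast
    then have t': "{w, t} \<in> F" "t \<noteq> u" unfolding X_def by (auto simp: in_neighbors_iff)
    then have "t \<noteq> w" using edge_endpoints(3)[OF G] by blast
    then show "e \<in> ?F'"
      using contract_map_image_edge[OF t'(1), of u w W] t t'(2) u(2) by (simp add: contract_map_def)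
  qed
  have "finite X" unfolding X_def using finite_neighbors[OF G] by simp
  have "card {e \<in> F. w \<notin> e} + card X = card ({e \<in> F. w \<notin> e} \<union> (\<lambda>t. {u, t}) ` X)"
  proof -
    have "inj_on (\<lambda>t. {u, t}) X" by (auto simp: inj_on_def doubleton_eq_iff)
    moreover have "{e \<in> F. w \<notin> e} \<inter> (\<lambda>t. {u, t}) ` X = {}"
      unfolding X_def by (auto simp: in_neighbors_iff)
    ultimately show ?thesis using simple_graph_finite_edges[OF G] \<open>finite X\<close>
      by (simp add: card_Un_disjoint card_image)
  qed
  also have "\<dots> \<le> card ?F'"
    using kept new simple_graph_finite_edges[OF simple_graph_contract[OF G u]] by (intro card_mono) auto
  finally have "card {e \<in> F. w \<notin> e} + card X \<le> card ?F'" .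
  moreover have "card (neighbors F w) \<le> card X + card (neighbors F u \<inter> neighbors F w) + 1"
  proof -
    have "neighbors F w \<subseteq> X \<union> (neighbors F u \<inter> neighbors F w) \<union> {u}" unfolding X_def by auto
    then have "card (neighbors F w) \<le> card (X \<union> (neighbors F u \<inter> neighbors F w) \<union> {u})"
      using \<open>finite X\<close> finite_neighbors[OF G] by (intro card_mono) auto
    also have "\<dots> \<le> card (X \<union> (neighbors F u \<inter> neighbors F w)) + 1"
      using card_Un_le[of _ "{u}"] by simp
    also have "\<dots> \<le> card X + card (neighbors F u \<inter> neighbors F w) + 1"
      using card_Un_le by simp
    finally show ?thesis .
  qed
  ultimately show ?thesis using card_edges_delete_vertex[OF G, of w] by linarith
qed

lemma model_of_contraction:
  assumes G: "simple_graph W F" and uw: "{u, w} \<in> F"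
    and "complete_bipartite_model s t (W - {w}) (snd (contract_edge u w (W, F))) B"
  shows "\<exists>B'. complete_bipartite_model s t W F B'"
proof -
  have "complete_bipartite_model s t W F (\<lambda>i. if u \<in> B i then insert w (B i) else B i)"
    by (rule model_uncontract[OF assms(3), where A = "neighbors F w"])
      (use edge_endpoints[OF G uw] contract_edge_subset[OF G] uw in
        \<open>auto simp: in_neighbors_iff\<close>)
  then show ?thesis by blast
qed

lemma card_edges_cubic:
  assumes G: "simple_graph W F" and "W \<noteq> {}" and cubic: "\<forall>x\<in>W. card (neighbors F x) = 3"
  shows "card F + 2 \<le> 2 * card W"
proof -
  have "2 * card F = 3 * card W" using sum_card_neighbors[OF G] cubic by simp
  moreover obtain x where x: "x \<in> W" using \<open>W \<noteq> {}\<close> by blast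
  then have "card (insert x (neighbors F x)) = 4"
    using cubic not_in_neighbors_self[OF G] finite_neighbors[OF G] by simp
  moreover have "card (insert x (neighbors F x)) \<le> card W"
    using x neighbors_subset[OF G] G unfolding simple_graph_def by (intro card_mono) auto
  ultimately show ?thesis by linarith
qed

lemma card_neighbors_le_3_if_no_K23:
  assumes G: "simple_graph W F" and no_K23: "\<nexists>B. complete_bipartite_model 2 3 W F B"
    and common: "\<forall>x y. {x, y} \<in> F \<longrightarrow> 2 \<le> card (neighbors F x \<inter> neighbors F y)"
    and not_sep: "\<not> one_separable W F" and u: "u \<in> W"
  shows "card (neighbors F u) \<le> 3"
proof (cases "neighbors F u = {}")
  case False
  have two_regular: "\<forall>x\<in>neighbors F u. card (neighbors F x \<inter> neighbors F u) = 2"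
  proof
    fix x assume "x \<in> neighbors F u"
    then have "{u, x} \<in> F" by (simp add: in_neighbors_iff)
    then have "2 \<le> card (neighbors F u \<inter> neighbors F x)"
      and "card (neighbors F u \<inter> neighbors F x) \<le> 2"
      using common card_common_neighbors_le_2_if_no_K23[OF G no_K23] edge_endpoints[OF G] by auto
    then show "card (neighbors F x \<inter> neighbors F u) = 2" by (simp add: Int_commute)
  qed
  obtain x where x: "x \<in> neighbors F u" using False by blast
  then obtain y y' where "neighbors F x \<inter> neighbors F u = {y, y'}" "y \<noteq> y'"
    using two_regular by (meson card_2_iff)
  then show ?thesis
    using neighbors_of_neighbor_adjacent[OF G no_K23 u two_regular x]
      triangle_in_neighborhood[OF G no_K23 u two_regular x] not_sep by blast
qed simp

lemma no_model_mono:
  "\<nexists>B. complete_bipartite_model s t W F B \<Longrightarrow> W' \<subseteq> W \<Longrightarrow> F' \<subseteq> F \<Longrightarrow>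
    \<nexists>B. complete_bipartite_model s t W' F' B"
  using model_mono by blast

lemma K23_free_reduction_cases:
  assumes G: "simple_graph W F" and no_K23: "\<nexists>B. complete_bipartite_model 2 3 W F B"
    and "W \<noteq> {}"
  obtains (trivial) "card W = 1"
    | (low_degree) x where "2 \<le> card W" "x \<in> W" "card (neighbors F x) \<le> 2"
    | (sparse_edge) u w where "2 \<le> card W" "{u, w} \<in> F" "card (neighbors F u \<inter> neighbors F w) \<le> 1"
    | (separable) "one_separable W F"
    | (cubic) "\<forall>x\<in>W. card (neighbors F x) = 3"
proof (cases "card W = 1")
  case False
  moreover have "card W \<noteq> 0" using \<open>W \<noteq> {}\<close> G unfolding simple_graph_def by simp
  ultimately have W2: "2 \<le> card W" by linarith
  show thesis
  proof (cases "(\<exists>x\<in>W. card (neighbors F x) \<le> 2) \<or>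
      (\<exists>u w. {u, w} \<in> F \<and> card (neighbors F u \<inter> neighbors F w) \<le> 1) \<or> one_separable W F")
    case True
    then show thesis using that(2-4) W2 by blast
  next
    case False
    have common: "\<forall>u w. {u, w} \<in> F \<longrightarrow> 2 \<le> card (neighbors F u \<inter> neighbors F w)"
    proof (intro allI impI)
      fix u w assume "{u, w} \<in> F"
      then have "\<not> card (neighbors F u \<inter> neighbors F w) \<le> 1" using False by blast
      then show "2 \<le> card (neighbors F u \<inter> neighbors F w)" by simp
    qed
    have "card (neighbors F x) = 3" if "x \<in> W" for x
    proof -
      have "card (neighbors F x) \<le> 3"
        using card_neighbors_le_3_if_no_K23[OF G no_K23 common _ that] False by blast
      moreover have "\<not> card (neighbors F x) \<le> 2" using False that by blast
      ultimately show ?thesis by simp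
    qed
    then show thesis using that(5) by blast
  qed
qed (rule that(1))

text \<open>Induction on the order: delete a vertex of degree at most 2, contract an edge with at
  most one common neighbour, or split along a separation of order at most 1; if none of
  these applies, the graph is cubic.\<close>

theorem card_edges_le_if_no_K23_model:
  "simple_graph W F \<Longrightarrow> W \<noteq> {} \<Longrightarrow> \<nexists>B. complete_bipartite_model 2 3 W F B \<Longrightarrow>
    card F + 2 \<le> 2 * card W"
proof (induction "card W" arbitrary: W F rule: less_induct)
  case less
  note G = less.prems(1) and no_K23 = less.prems(3)
  have fW: "finite W" using G unfolding simple_graph_def by simp
  show ?case
  proof (cases rule: K23_free_reduction_cases[OF G no_K23 less.prems(2),
        case_names trivial low_degree sparse_edge separable cubic])
    case trivial
    have "card e \<le> card W" if "e \<in> F" for e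
      using that G card_mono[OF fW] unfolding simple_graph_def by blast
    then have "F = {}" using trivial G unfolding simple_graph_def by fastforce
    then show ?thesis using trivial by simp
  next
    case (low_degree x)
    have card_W: "card (W - {x}) + 1 = card W" using low_degree fW by (simp add: card_Suc_Diff1)
    then have "card (W - {x}) \<noteq> 0" using low_degree(1) by linarith
    then have nonempty: "W - {x} \<noteq> {}" by (metis card.empty)
    have smaller: "card (W - {x}) < card W" using card_W by simp
    have no_K23': "\<nexists>B. complete_bipartite_model 2 3 (W - {x}) {e \<in> F. x \<notin> e} B"
      by (rule no_model_mono[OF no_K23]) auto
    have "card {e \<in> F. x \<notin> e} + 2 \<le> 2 * card (W - {x})"
      using less.hyps[OF smaller simple_graph_delete_vertex[OF G] nonempty no_K23'] .
    then show ?thesis using card_edges_delete_vertex[OF G, of x] low_degree(3) card_W by linarith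
  next
    case (sparse_edge u w)
    have uw: "u \<in> W" "w \<in> W" "u \<noteq> w" using edge_endpoints[OF G sparse_edge(2)] by auto
    have card_W: "card (W - {w}) + 1 = card W" using card_Suc_Diff1[OF fW uw(2)] by simp
    then have "card (W - {w}) \<noteq> 0" using sparse_edge(1) by linarith
    then have nonempty: "W - {w} \<noteq> {}" by (metis card.empty)
    have smaller: "card (W - {w}) < card W" using card_W by simp
    have no_K23': "\<nexists>B. complete_bipartite_model 2 3 (W - {w}) (snd (contract_edge u w (W, F))) B"
      using no_K23 model_of_contraction[OF G sparse_edge(2)] by blast
    have "card (snd (contract_edge u w (W, F))) + 2 \<le> 2 * card (W - {w})"
      using less.hyps[OF smaller simple_graph_contract[OF G uw(1,3)] nonempty no_K23'] .
    then show ?thesis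
      using card_edges_contract[OF G sparse_edge(2)] sparse_edge(3) card_W by linarith
  next
    case separable
    then obtain W1 W2 where W: "W1 \<union> W2 = W" "card (W1 \<inter> W2) \<le> 1" "W1 - W2 \<noteq> {}"
      "W2 - W1 \<noteq> {}" "\<forall>x\<in>W1 - W2. \<forall>y\<in>W2 - W1. {x, y} \<notin> F"
      unfolding one_separable_def by blast
    have "finite W1" "finite W2" using fW W(1) by auto
    have bound: "card {e \<in> F. e \<subseteq> Wi} + 2 \<le> 2 * card Wi" if "Wi = W1 \<or> Wi = W2" for Wi
    proof (rule less.hyps)
      have "Wi \<subset> W" using that W(1,3,4) by blast
      then show "card Wi < card W" using fW by (rule psubset_card_mono[rotated])
      show "simple_graph Wi {e \<in> F. e \<subseteq> Wi}" using that W(1) simple_graph_induced[OF G] by blast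
      show "Wi \<noteq> {}" using that W(3,4) by blast
      show "\<nexists>B. complete_bipartite_model 2 3 Wi {e \<in> F. e \<subseteq> Wi} B"
        using that W(1) by (intro no_model_mono[OF no_K23]) auto
    qed
    have "card W1 + card W2 = card W + card (W1 \<inter> W2)"
      using card_Un_Int[OF \<open>finite W1\<close> \<open>finite W2\<close>] W(1) by simp
    then show ?thesis
      using card_edges_separation[OF G W(1,2,5)] W(2) bound[of W1] bound[of W2] by simp
  next
    case cubic
    then show ?thesis using card_edges_cubic[OF G less.prems(2)] by blast
  qed
qed

lemma neighborhood_count_arith:
  fixes d r e S M :: nat
  assumes d: "7 \<le> d" and r: "3 \<le> r" and e: "e + 2 \<le> 2 * d" and M: "M \<le> d"
    and S_max: "S \<le> r * M" and S_pair: "S \<le> M + (r - 1) * (d + 2 - M)"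
    and e_M: "3 \<le> M \<Longrightarrow> e + M \<le> 2 * d + 1"
  shows "2 * e + S \<le> (r + 2) * d"
proof -
  obtain a b where ab: "d = a + 7" "r = b + 3" using d r by (metis add.commute le_Suc_ex)
  consider "M \<le> 2" | "3 \<le> M" "M + 2 \<le> d" | "3 \<le> M" "d \<le> M + 1" by linarith
  then show ?thesis
  proof cases
    case 1
    then have "S \<le> r * 2" using S_max by (meson le_trans mult_le_mono2)
    then show ?thesis using e unfolding ab by (simp add: algebra_simps)
  next
    case 2
    then obtain c where c: "d = M + 2 + c" by (metis add.commute le_Suc_ex)
    have "r * M + 2 * (d - M) + 2 \<le> r * d" unfolding c ab by (simp add: algebra_simps)
    then show ?thesis using S_max e_M[OF 2(1)] M by (simp add: algebra_simps)
  next
    case 3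
    then consider "M = d" | "M + 1 = d" using M by linarith
    then show ?thesis
    proof cases
      case 1
      then show ?thesis using S_pair e_M[OF 3(1)] unfolding ab by (simp add: algebra_simps)
    next
      case 2
      then show ?thesis using S_pair e_M[OF 3(1)] unfolding ab by (simp add: algebra_simps)
    qed
  qed
qed

section \<open>Neighbourhoods in graphs without a \<open>K\<^sub>3\<^sub>,\<^sub>3\<close> minor\<close>

lemma sum_card_neighbors_between:
  assumes "finite X" "finite Y"
  shows "(\<Sum>x\<in>X. card (neighbors F x \<inter> Y)) = (\<Sum>y\<in>Y. card (neighbors F y \<inter> X))"
proof -
  have card_eq: "card (neighbors F x \<inter> Z) = (\<Sum>z\<in>Z. if {x, z} \<in> F then 1 else 0)"
    if "finite Z" for x Z
  proof -
    have "neighbors F x \<inter> Z = {z \<in> Z. {x, z} \<in> F}" by (auto simp: in_neighbors_iff)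
    then show ?thesis using that by (simp add: sum.inter_filter[symmetric])
  qed
  have "(\<Sum>x\<in>X. card (neighbors F x \<inter> Y)) = (\<Sum>x\<in>X. \<Sum>y\<in>Y. if {x, y} \<in> F then 1 else 0)"
    using card_eq[OF assms(2)] by simp
  also have "\<dots> = (\<Sum>y\<in>Y. \<Sum>x\<in>X. if {y, x} \<in> F then 1 else 0)"
    by (subst sum.swap) (simp add: insert_commute)
  also have "\<dots> = (\<Sum>y\<in>Y. card (neighbors F y \<inter> X))"
    using card_eq[OF assms(1)] by simp
  finally show ?thesis .
qed

lemma sum_card_neighbors_neighborhood:
  assumes G: "simple_graph V E" and v: "v \<in> V"
  defines "N \<equiv> neighbors E v"
  shows "(\<Sum>u\<in>N. card (neighbors E u)) =
    card N + 2 * card {e \<in> E. e \<subseteq> N} + (\<Sum>r\<in>V - N - {v}. card (neighbors E r \<inter> N))"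
proof -
  let ?R = "V - N - {v}"
  have fN: "finite N" and fR: "finite ?R" and NV: "N \<subseteq> V"
    using finite_neighbors[OF G] neighbors_subset[OF G] G unfolding N_def simple_graph_def by auto
  have split_degree:
    "card (neighbors E u) = 1 + card (neighbors E u \<inter> N) + card (neighbors E u \<inter> ?R)"
    if "u \<in> N" for u
  proof -
    have "neighbors E u = insert v ((neighbors E u \<inter> N) \<union> (neighbors E u \<inter> ?R))"
      using that neighbors_subset[OF G, of u] neighbors_sym[of v E u] unfolding N_def by auto
    moreover have "v \<notin> (neighbors E u \<inter> N) \<union> (neighbors E u \<inter> ?R)"
      using not_in_neighbors_self[OF G] unfolding N_def by blast
    moreover have "card ((neighbors E u \<inter> N) \<union> (neighbors E u \<inter> ?R)) =
        card (neighbors E u \<inter> N) + card (neighbors E u \<inter> ?R)"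
      using fN fR by (intro card_Un_disjoint) auto
    ultimately show ?thesis using fN fR by (metis card_insert_disjoint finite_Int finite_Un plus_1_eq_Suc
        add.assoc)
  qed
  have "(\<Sum>u\<in>N. card (neighbors E u)) =
      (\<Sum>u\<in>N. 1 + card (neighbors E u \<inter> N) + card (neighbors E u \<inter> ?R))"
    using split_degree by (rule sum.cong[OF HOL.refl])
  also have "\<dots> =
      card N + (\<Sum>u\<in>N. card (neighbors E u \<inter> N)) + (\<Sum>u\<in>N. card (neighbors E u \<inter> ?R))"
    by (simp only: sum.distrib card_eq_sum)
  also have "(\<Sum>u\<in>N. card (neighbors E u \<inter> N)) = 2 * card {e \<in> E. e \<subseteq> N}"
    using sum_card_neighbors_inside[OF G NV] .
  also have "(\<Sum>u\<in>N. card (neighbors E u \<inter> ?R)) = (\<Sum>r\<in>?R. card (neighbors E r \<inter> N))"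
    using sum_card_neighbors_between[OF fN fR] .
  finally show ?thesis .
qed

lemma model_nonempty:
  "complete_bipartite_model s t W F B \<Longrightarrow> i < s + t \<Longrightarrow> B i \<noteq> {}"
  using model_connected unfolding connected_set_def by blast

text \<open>\<open>v\<close> is the apex completing the \<open>K\<^sub>2\<^sub>,\<^sub>3\<close> model to a \<open>K\<^sub>3\<^sub>,\<^sub>3\<close> model.\<close>

lemma no_K23_model_meeting_neighborhood:
  assumes no_K33: "\<nexists>B. complete_bipartite_model 3 3 V E B" and v: "v \<in> V"
    and model: "complete_bipartite_model 2 3 W F B" and "F \<subseteq> E" "W \<subseteq> V" "v \<notin> W"
    and meets: "\<forall>j\<in>{2..<5}. B j \<inter> neighbors E v \<noteq> {}"
  shows False
proof -
  have "\<forall>i<5. v \<notin> B i" using model_subset[OF model] \<open>v \<notin> W\<close> by auto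
  moreover have "\<forall>j\<in>{2..<5}. joined E {v} (B j)"
    using meets unfolding joined_def by (auto simp: in_neighbors_iff)
  ultimately show False using ex_K33_model_apex[OF model \<open>F \<subseteq> E\<close> \<open>W \<subseteq> V\<close> v] no_K33 by blast
qed

lemma card_edges_in_neighborhood:
  assumes G: "simple_graph V E" and no_K33: "\<nexists>B. complete_bipartite_model 3 3 V E B"
    and v: "v \<in> V" and "neighbors E v \<noteq> {}"
  shows "card {e \<in> E. e \<subseteq> neighbors E v} + 2 \<le> 2 * card (neighbors E v)"
proof (rule card_edges_le_if_no_K23_model)
  let ?N = "neighbors E v"
  show "simple_graph ?N {e \<in> E. e \<subseteq> ?N}" using simple_graph_induced[OF G neighbors_subset[OF G]] .
  show "\<nexists>B. complete_bipartite_model 2 3 ?N {e \<in> E. e \<subseteq> ?N} B"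
  proof
    assume "\<exists>B. complete_bipartite_model 2 3 ?N {e \<in> E. e \<subseteq> ?N} B"
    then obtain B where B: "complete_bipartite_model 2 3 ?N {e \<in> E. e \<subseteq> ?N} B" by blast
    have "\<forall>j\<in>{2..<5}. B j \<inter> ?N \<noteq> {}"
      using model_nonempty[OF B] model_subset[OF B] by (auto simp: Int_absorb2)
    then show False
      using no_K23_model_meeting_neighborhood[OF no_K33 v B _ neighbors_subset[OF G]]
        not_in_neighbors_self[OF G] by blast
  qed
qed fact

lemma card_common_neighbors_outside_pair:
  assumes G: "simple_graph V E" and no_K33: "\<nexists>B. complete_bipartite_model 3 3 V E B"
    and v: "v \<in> V" and r: "r \<in> V - neighbors E v - {v}" "r' \<in> V - neighbors E v - {v}" "r \<noteq> r'"
  shows "card (neighbors E r \<inter> neighbors E v) + card (neighbors E r' \<inter> neighbors E v)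
    \<le> card (neighbors E v) + 2"
proof -
  let ?N = "neighbors E v" and ?A = "neighbors E r \<inter> neighbors E v"
    and ?A' = "neighbors E r' \<inter> neighbors E v"
  have "v \<noteq> r" "v \<noteq> r'" using r by auto
  then have "card (?A \<inter> ?A') \<le> 2"
    using card_common_neighbors_le_2_if_no_K33[OF G no_K33 v, of r r'] r by (simp add: Int_ac)
  moreover have "card (?A \<union> ?A') \<le> card ?N"
    using finite_neighbors[OF G] by (intro card_mono) auto
  moreover have "card ?A + card ?A' = card (?A \<union> ?A') + card (?A \<inter> ?A')"
    using finite_neighbors[OF G] by (intro card_Un_Int) auto
  ultimately show ?thesis by linarith
qed

text \<open>Edges from a common neighbour \<open>a\<close> of \<open>v\<close> and \<open>r\<close> to further such common neighbours
  may be added to the neighbourhood of \<open>v\<close> without creating a \<open>K\<^sub>2\<^sub>,\<^sub>3\<close> model: \<open>r\<close> realises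
  them through the contracted edge \<open>{a, r}\<close>.\<close>

lemma no_K23_model_neighborhood_plus_star:
  assumes G: "simple_graph V E" and no_K33: "\<nexists>B. complete_bipartite_model 3 3 V E B"
    and v: "v \<in> V" and r: "r \<in> V - neighbors E v - {v}"
    and a: "a \<in> neighbors E r \<inter> neighbors E v"
    and F: "F \<subseteq> E \<union> {{a, x} | x. x \<in> neighbors E r \<inter> neighbors E v}"
  shows "\<nexists>B. complete_bipartite_model 2 3 (neighbors E v) F B"
proof
  let ?N = "neighbors E v"
  assume "\<exists>B. complete_bipartite_model 2 3 ?N F B"
  then obtain B where B: "complete_bipartite_model 2 3 ?N F B" by blast
  have "?N \<subseteq> V" "v \<notin> ?N" using neighbors_subset[OF G] not_in_neighbors_self[OF G] by auto
  have "complete_bipartite_model 2 3 (insert r ?N) E (\<lambda>i. if a \<in> B i then insert r (B i) else B i)"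
    using model_uncontract[OF B, of r "insert r ?N" a E "neighbors E r \<inter> ?N"] r a F
    by (auto simp: in_neighbors_iff insert_commute)
  moreover have "\<forall>j\<in>{2..<5}. (if a \<in> B j then insert r (B j) else B j) \<inter> ?N \<noteq> {}"
    using model_nonempty[OF B] model_subset[OF B] by fastforce
  ultimately show False
    using no_K23_model_meeting_neighborhood[OF no_K33 v] r \<open>?N \<subseteq> V\<close> \<open>v \<notin> ?N\<close> by blast
qed

lemma card_edges_in_neighborhood_common:
  assumes G: "simple_graph V E" and no_K33: "\<nexists>B. complete_bipartite_model 3 3 V E B"
    and v: "v \<in> V" and r: "r \<in> V - neighbors E v - {v}"
    and common: "neighbors E r \<inter> neighbors E v \<noteq> {}"
  shows "card {e \<in> E. e \<subseteq> neighbors E v} + card (neighbors E r \<inter> neighbors E v)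
    \<le> 2 * card (neighbors E v) + 1"
proof -
  define N where "N = neighbors E v"
  define A where "A = neighbors E r \<inter> N"
  define FN where "FN = {e \<in> E. e \<subseteq> N}"
  obtain a where a: "a \<in> A" using common unfolding A_def N_def by blast
  have NV: "N \<subseteq> V" and fN: "finite N" and vN: "v \<notin> N" and AN: "A \<subseteq> N"
    using neighbors_subset[OF G] finite_neighbors[OF G] not_in_neighbors_self[OF G]
    unfolding N_def A_def by auto
  have aN: "a \<in> N" using a unfolding A_def by blast
  define F where "F = FN \<union> (\<lambda>x. {a, x}) ` (A - {a})"
  have GF: "simple_graph N F"
    using simple_graph_induced[OF G NV] aN AN unfolding F_def FN_def simple_graph_def by auto
  have "F \<subseteq> E \<union> {{a, x} | x. x \<in> A}" unfolding F_def FN_def by auto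
  then have "\<nexists>B. complete_bipartite_model 2 3 N F B"
    using no_K23_model_neighborhood_plus_star[OF G no_K33 v r] a unfolding A_def N_def by blast
  then have "card F + 2 \<le> 2 * card N"
    using card_edges_le_if_no_K23_model[OF GF] aN by blast
  moreover have "card (A - {a} - neighbors E a) \<le> card (F - FN)"
  proof -
    have "(\<lambda>x. {a, x}) ` (A - {a} - neighbors E a) \<subseteq> F - FN"
      unfolding F_def FN_def by (auto simp: in_neighbors_iff)
    moreover have "inj_on (\<lambda>x. {a, x}) (A - {a} - neighbors E a)"
      by (auto simp: inj_on_def doubleton_eq_iff)
    ultimately show ?thesis
      using simple_graph_finite_edges[OF GF] card_image card_mono by (metis finite_Diff)
  qed
  moreover have "card (neighbors E a \<inter> A) \<le> 2"
  proof -
    have "neighbors E a \<inter> A = neighbors E v \<inter> neighbors E r \<inter> neighbors E a"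
      unfolding A_def N_def by auto
    moreover have "r \<in> V" "a \<in> V" "v \<noteq> r" "v \<noteq> a" "r \<noteq> a"
      using r aN NV vN unfolding N_def by auto
    ultimately show ?thesis using card_common_neighbors_le_2_if_no_K33[OF G no_K33 v] by simp
  qed
  moreover have "card A \<le> 1 + card (neighbors E a \<inter> A) + card (A - {a} - neighbors E a)"
  proof -
    have "A \<subseteq> {a} \<union> (neighbors E a \<inter> A) \<union> (A - {a} - neighbors E a)" by auto
    then have "card A \<le> card ({a} \<union> (neighbors E a \<inter> A) \<union> (A - {a} - neighbors E a))"
      using finite_subset[OF AN fN] by (intro card_mono) auto
    also have "\<dots> \<le> card ({a} \<union> (neighbors E a \<inter> A)) + card (A - {a} - neighbors E a)"
      by (rule card_Un_le)
    also have "\<dots> \<le> 1 + card (neighbors E a \<inter> A) + card (A - {a} - neighbors E a)"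
      using card_Un_le[of "{a}"] by simp
    finally show ?thesis .
  qed
  moreover have "card FN + card (F - FN) = card F"
    using simple_graph_finite_edges[OF GF] unfolding F_def by (subst card_Un_disjoint[symmetric]) auto
  ultimately show ?thesis unfolding FN_def A_def N_def by linarith
qed

lemma degree_sq_plus_sum_neighbor_degrees_le_if_small:
  assumes G: "simple_graph V E" and v: "v \<in> V"
    and max_degree: "\<forall>x\<in>V. card (neighbors E x) + 4 \<le> card V" and small: "card (neighbors E v) \<le> 6"
  shows "card (neighbors E v) * card (neighbors E v) + (\<Sum>u\<in>neighbors E v. card (neighbors E u))
    \<le> (card V + 2) * card (neighbors E v)"
proof -
  let ?d = "card (neighbors E v)"
  obtain k where k: "card V = k + 4" using max_degree v by (metis add.commute le_Suc_ex le_add2 le_trans)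
  have "(\<Sum>u\<in>neighbors E v. card (neighbors E u)) \<le> ?d * k"
    using sum_bounded_above[of "neighbors E v" "\<lambda>u. card (neighbors E u)" k] max_degree
      neighbors_subset[OF G] k by fastforce
  moreover have "?d * ?d \<le> ?d * 6" using small by simp
  moreover have "(card V + 2) * ?d = ?d * k + ?d * 6" unfolding k by (simp add: algebra_simps)
  ultimately show ?thesis by linarith
qed

lemma sum_card_common_neighbors_outside_le:
  assumes G: "simple_graph V E" and no_K33: "\<nexists>B. complete_bipartite_model 3 3 V E B"
    and v: "v \<in> V" and r0: "r0 \<in> V - neighbors E v - {v}"
  defines "R \<equiv> V - neighbors E v - {v}" and "A \<equiv> \<lambda>r. neighbors E r \<inter> neighbors E v"
  shows "(\<Sum>r\<in>R. card (A r)) \<le> card (A r0) + (card R - 1) * (card (neighbors E v) + 2 - card (A r0))"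
proof -
  have fR: "finite R" using G unfolding R_def simple_graph_def by simp
  have "card (A r) \<le> card (neighbors E v) + 2 - card (A r0)" if "r \<in> R - {r0}" for r
    using card_common_neighbors_outside_pair[OF G no_K33 v, of r r0] that r0
    unfolding A_def R_def by auto
  then have "(\<Sum>r\<in>R - {r0}. card (A r)) \<le> (card R - 1) * (card (neighbors E v) + 2 - card (A r0))"
    using sum_bounded_above[of "R - {r0}" "\<lambda>r. card (A r)"] r0 fR unfolding R_def by simp
  then show ?thesis using sum.remove[OF fR, of r0 "\<lambda>r. card (A r)"] r0 unfolding R_def by simp
qed

lemma degree_sq_plus_sum_neighbor_degrees_le:
  assumes G: "simple_graph V E" and no_K33: "\<nexists>B. complete_bipartite_model 3 3 V E B"
    and v: "v \<in> V" and max_degree: "\<forall>x\<in>V. card (neighbors E x) + 4 \<le> card V"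
  shows "card (neighbors E v) * card (neighbors E v) + (\<Sum>u\<in>neighbors E v. card (neighbors E u))
    \<le> (card V + 2) * card (neighbors E v)"
proof (cases "card (neighbors E v) \<le> 6")
  case False
  define N where "N = neighbors E v"
  define d where "d = card N"
  define R where "R = V - N - {v}"
  define A where "A r = neighbors E r \<inter> N" for r
  have NV: "N \<subseteq> V" and fN: "finite N" and vN: "v \<notin> N" and fR: "finite R"
    using neighbors_subset[OF G] finite_neighbors[OF G] not_in_neighbors_self[OF G] G
    unfolding N_def R_def simple_graph_def by auto
  have n: "card V = d + 1 + card R"
  proof -
    have "V = insert v (N \<union> R)" "v \<notin> N \<union> R" "N \<inter> R = {}" using v NV vN unfolding R_def by auto
    then show ?thesis unfolding d_def using fN fR by (simp add: card_Un_disjoint)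
  qed
  have R3: "3 \<le> card R" using max_degree v n unfolding d_def N_def by fastforce
  have d7: "7 \<le> d" using False unfolding d_def N_def by simp
  define M where "M = Max (card ` A ` R)"
  obtain r0 where r0: "r0 \<in> R" "card (A r0) = M"
    using Max_in[of "card ` A ` R"] R3 fR unfolding M_def by fastforce
  have "M \<le> d" using r0 fN card_mono[of N "A r0"] unfolding A_def d_def by auto
  have S_max: "(\<Sum>r\<in>R. card (A r)) \<le> card R * M"
    using sum_bounded_above[of R "\<lambda>r. card (A r)" M] fR unfolding M_def by simp
  have S_pair: "(\<Sum>r\<in>R. card (A r)) \<le> M + (card R - 1) * (d + 2 - M)"
    using sum_card_common_neighbors_outside_le[OF G no_K33 v, of r0] r0
    unfolding A_def R_def N_def d_def by simp
  have e_bound: "card {e \<in> E. e \<subseteq> N} + 2 \<le> 2 * d"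
    using card_edges_in_neighborhood[OF G no_K33 v] d7 unfolding d_def N_def by force
  have e_M: "card {e \<in> E. e \<subseteq> N} + M \<le> 2 * d + 1" if "3 \<le> M"
    using card_edges_in_neighborhood_common[OF G no_K33 v, of r0] r0 that
    unfolding A_def R_def N_def d_def by force
  have "2 * card {e \<in> E. e \<subseteq> N} + (\<Sum>r\<in>R. card (A r)) \<le> (card R + 2) * d"
    using neighborhood_count_arith[OF d7 R3 e_bound \<open>M \<le> d\<close> S_max S_pair e_M] .
  moreover have "(\<Sum>u\<in>N. card (neighbors E u)) =
      d + 2 * card {e \<in> E. e \<subseteq> N} + (\<Sum>r\<in>R. card (A r))"
    using sum_card_neighbors_neighborhood[OF G v] unfolding N_def d_def R_def A_def .
  moreover have "(card V + 2) * d = d * d + d + (card R + 2) * d" unfolding n by (simp add: algebra_simps)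
  ultimately show ?thesis unfolding N_def d_def by (simp add: mult.commute)
qed (rule degree_sq_plus_sum_neighbor_degrees_le_if_small[OF G v max_degree])

section \<open>The signless Laplacian\<close>

definition real_matrix_eigenvalue :: "nat \<Rightarrow> (nat \<Rightarrow> nat \<Rightarrow> real) \<Rightarrow> real \<Rightarrow> bool" where
  "real_matrix_eigenvalue n Q a \<longleftrightarrow>
     (\<exists>x. (\<exists>i<n. x i \<noteq> 0) \<and> (\<forall>i<n. (\<Sum>j<n. Q i j * x j) = a * x i))"

lemma mult_mat_vec_entry:
  assumes "i < n" "dim_vec v = n"
  shows "(mat n n (\<lambda>(i, j). f i j) *\<^sub>v v) $ i = (\<Sum>j<n. f i j * v $ j)"
  using assms by (simp add: scalar_prod_def atLeast0LessThan)

lemma finite_real_matrix_eigenvalues: "finite {a. real_matrix_eigenvalue n Q a}"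
proof (rule finite_subset)
  let ?A = "mat n n (\<lambda>(i, j). Q i j)"
  show "finite (spectrum ?A)" using card_finite_spectrum(1)[of ?A n] by simp
  show "{a. real_matrix_eigenvalue n Q a} \<subseteq> spectrum ?A"
  proof
    fix a assume "a \<in> {a. real_matrix_eigenvalue n Q a}"
    then obtain x i0 where x: "i0 < n" "x i0 \<noteq> 0" "\<forall>i<n. (\<Sum>j<n. Q i j * x j) = a * x i"
      unfolding real_matrix_eigenvalue_def by blast
    have "eigenvector ?A (vec n x) a" unfolding eigenvector_def
    proof (intro conjI)
      show "vec n x \<noteq> 0\<^sub>v (dim_row ?A)"
        using x(1,2) by (metis dim_row_mat(1) index_vec index_zero_vec(1))
      show "?A *\<^sub>v vec n x = a \<cdot>\<^sub>v vec n x"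
      proof (rule eq_vecI)
        fix i assume "i < dim_vec (a \<cdot>\<^sub>v vec n x)"
        then have i: "i < n" by simp
        have "(?A *\<^sub>v vec n x) $ i = (\<Sum>j<n. Q i j * vec n x $ j)"
          by (rule mult_mat_vec_entry[OF i]) simp
        also have "\<dots> = a * x i" using x(3) i by simp
        finally show "(?A *\<^sub>v vec n x) $ i = (a \<cdot>\<^sub>v vec n x) $ i" using i by simp
      qed simp
    qed simp
    then show "a \<in> spectrum ?A" unfolding spectrum_def eigenvalue_def by auto
  qed
qed

text \<open>The classical argument that the eigenvalues of a real symmetric matrix are real: pairing
  the real and imaginary parts of a complex eigenvector with the matrix gives
  \<open>Im \<lambda> \<cdot> \<parallel>z\<parallel>\<^sup>2 = 0\<close>.\<close>

lemma symmetric_complex_eigenvector_real: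
  fixes Q :: "nat \<Rightarrow> nat \<Rightarrow> real" and z :: "nat \<Rightarrow> complex"
  assumes sym: "\<And>i j. i < n \<Longrightarrow> j < n \<Longrightarrow> Q i j = Q j i"
    and z: "i0 < n" "z i0 \<noteq> 0" and eq: "\<forall>i<n. (\<Sum>j<n. complex_of_real (Q i j) * z j) = lam * z i"
  shows "real_matrix_eigenvalue n Q (Re lam)"
proof -
  define p where "p j = Re (z j)" for j
  define q where "q j = Im (z j)" for j
  define a where "a = Re lam"
  define b where "b = Im lam"
  have pe: "(\<Sum>j<n. Q i j * p j) = a * p i - b * q i"
    and qe: "(\<Sum>j<n. Q i j * q j) = b * p i + a * q i" if "i < n" for i
    using arg_cong[OF eq[rule_format, OF that], of Re] arg_cong[OF eq[rule_format, OF that], of Im]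
    unfolding p_def q_def a_def b_def by (simp_all add: Re_sum Im_sum algebra_simps)
  have "(\<Sum>i<n. p i * (\<Sum>j<n. Q i j * q j)) = (\<Sum>i<n. q i * (\<Sum>j<n. Q i j * p j))"
  proof -
    have "(\<Sum>i<n. p i * (\<Sum>j<n. Q i j * q j)) = (\<Sum>i<n. \<Sum>j<n. Q i j * p i * q j)"
      by (simp add: sum_distrib_left algebra_simps)
    also have "\<dots> = (\<Sum>j<n. \<Sum>i<n. Q i j * p i * q j)" by (rule sum.swap)
    also have "\<dots> = (\<Sum>j<n. \<Sum>i<n. Q j i * p i * q j)"
      by (intro sum.cong HOL.refl) (simp add: sym)
    also have "\<dots> = (\<Sum>i<n. q i * (\<Sum>j<n. Q i j * p j))"
      by (simp add: sum_distrib_left algebra_simps)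
    finally show ?thesis .
  qed
  then have "(\<Sum>i<n. p i * (b * p i + a * q i)) = (\<Sum>i<n. q i * (a * p i - b * q i))"
    using pe qe by simp
  then have "b * (\<Sum>i<n. p i * p i + q i * q i) = 0"
    by (simp add: sum_distrib_left algebra_simps sum_subtractf sum.distrib)
  moreover have "p i0 \<noteq> 0 \<or> q i0 \<noteq> 0" using z(2) unfolding p_def q_def using complex_eqI by force
  then have "(\<Sum>i<n. p i * p i + q i * q i) > 0"
    using z(1) by (intro sum_pos2[of "{..<n}" i0]) (auto simp: sum_squares_gt_zero_iff)
  ultimately have "b = 0" by simp
  then show ?thesis
    using pe qe z(1) \<open>p i0 \<noteq> 0 \<or> q i0 \<noteq> 0\<close> unfolding real_matrix_eigenvalue_def a_def by auto
qed

lemma symmetric_real_matrix_eigenvalue_exists: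
  fixes Q :: "nat \<Rightarrow> nat \<Rightarrow> real"
  assumes "\<And>i j. i < n \<Longrightarrow> j < n \<Longrightarrow> Q i j = Q j i" and "0 < n"
  shows "\<exists>a. real_matrix_eigenvalue n Q a"
proof -
  let ?A = "mat n n (\<lambda>(i, j). complex_of_real (Q i j))"
  obtain lam where "lam \<in> spectrum ?A" using spectrum_non_empty[OF _ \<open>0 < n\<close>] by fastforce
  then obtain z where z: "z \<in> carrier_vec n" "z \<noteq> 0\<^sub>v n" "?A *\<^sub>v z = lam \<cdot>\<^sub>v z"
    unfolding spectrum_def eigenvalue_def eigenvector_def by auto
  have dz: "dim_vec z = n" using z(1) by simp
  then obtain i0 where "i0 < n" "z $ i0 \<noteq> 0"
    using z(2) by (metis eq_vecI index_zero_vec(1) index_zero_vec(2))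
  moreover have "\<forall>i<n. (\<Sum>j<n. complex_of_real (Q i j) * z $ j) = lam * z $ i"
  proof (intro allI impI)
    fix i assume "i < n"
    then have "(?A *\<^sub>v z) $ i = (\<Sum>j<n. complex_of_real (Q i j) * z $ j)"
      using mult_mat_vec_entry[OF _ dz] by simp
    then show "(\<Sum>j<n. complex_of_real (Q i j) * z $ j) = lam * z $ i"
      using z(3) \<open>i < n\<close> dz by simp
  qed
  ultimately show ?thesis using symmetric_complex_eigenvector_real[of n Q] assms(1) by blast
qed

definition signless_laplacian_entry :: "'a set set \<Rightarrow> 'a \<Rightarrow> 'a \<Rightarrow> real" where
  "signless_laplacian_entry E u w = (if u = w then real (Defs.degree E u) else if adj E u w then 1 else 0)"

lemma signless_laplacian_entry_sym: "signless_laplacian_entry E u w = signless_laplacian_entry E w u"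
  unfolding signless_laplacian_entry_def adj_def by (simp add: insert_commute)

lemma adjacent_vertices_eq_neighbors: "simple_graph V E \<Longrightarrow> {u \<in> V. adj E v u} = neighbors E v"
  using neighbors_subset unfolding adj_def neighbors_def by fastforce

lemma sum_signless_laplacian_row:
  assumes G: "simple_graph V E" and v: "v \<in> V"
  shows "(\<Sum>u\<in>V. signless_laplacian_entry E v u * x u) =
    real (Defs.degree E v) * x v + (\<Sum>u\<in>{u \<in> V. adj E v u}. x u)"
proof -
  have fV: "finite V" using G unfolding simple_graph_def by simp
  have "\<not> adj E v v" using G unfolding simple_graph_def adj_def by force
  have "(\<Sum>u\<in>V. signless_laplacian_entry E v u * x u) =
      real (Defs.degree E v) * x v + (\<Sum>u\<in>V - {v}. signless_laplacian_entry E v u * x u)"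
    using fV v by (simp add: sum.remove signless_laplacian_entry_def)
  also have "(\<Sum>u\<in>V - {v}. signless_laplacian_entry E v u * x u) =
      (\<Sum>u\<in>V - {v}. if adj E v u then x u else 0)"
    by (rule sum.cong) (auto simp: signless_laplacian_entry_def)
  also have "\<dots> = (\<Sum>u\<in>{u \<in> V - {v}. adj E v u}. x u)"
    by (rule sum.inter_filter[symmetric]) (use fV in simp)
  also have "{u \<in> V - {v}. adj E v u} = {u \<in> V. adj E v u}" using \<open>\<not> adj E v v\<close> by auto
  finally show ?thesis .
qed

lemma signless_laplacian_eigenvalue_iff_matrix:
  assumes G: "simple_graph V E" and f: "bij_betw f {..<n} V"
  shows "signless_laplacian_eigenvalue V E mu \<longleftrightarrow>
    real_matrix_eigenvalue n (\<lambda>i j. signless_laplacian_entry E (f i) (f j)) mu"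
proof -
  let ?Q = "signless_laplacian_entry E"
  have row: "real (Defs.degree E v) * x v + (\<Sum>u\<in>{u \<in> V. adj E v u}. x u) = (\<Sum>j<n. ?Q v (f j) * x (f j))"
    if "v \<in> V" for v and x :: "'a \<Rightarrow> real"
    using sum_signless_laplacian_row[OF G that] sum.reindex_bij_betw[OF f, of "\<lambda>u. ?Q v u * x u"]
    by simp
  define g where "g = the_inv_into {..<n} f"
  have fg: "f (g v) = v" "g v < n" if "v \<in> V" for v
    using f_the_inv_into_f_bij_betw[OF f that] bij_betw_the_inv_into[OF f] that
    unfolding g_def by (auto simp: bij_betw_def)
  have gf: "g (f i) = i" if "i < n" for i
    using the_inv_into_f_f[of f "{..<n}" i] f that unfolding g_def bij_betw_def by simp
  have fV: "f i \<in> V" if "i < n" for i using f that by (auto simp: bij_betw_def)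
  show ?thesis
  proof
    assume "signless_laplacian_eigenvalue V E mu"
    then obtain x v where x: "v \<in> V" "x v \<noteq> 0"
      "\<forall>v\<in>V. real (Defs.degree E v) * x v + (\<Sum>u\<in>{u \<in> V. adj E v u}. x u) = mu * x v"
      unfolding signless_laplacian_eigenvalue_def by blast
    show "real_matrix_eigenvalue n (\<lambda>i j. ?Q (f i) (f j)) mu"
      unfolding real_matrix_eigenvalue_def
    proof (intro exI[of _ "x \<circ> f"] conjI allI impI)
      show "\<exists>i<n. (x \<circ> f) i \<noteq> 0" using x(1,2) fg by (intro exI[of _ "g v"]) simp
      fix i assume "i < n"
      then show "(\<Sum>j<n. ?Q (f i) (f j) * (x \<circ> f) j) = mu * (x \<circ> f) i"
        using row[OF fV[OF \<open>i < n\<close>], of x] x(3) fV by simp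
    qed
  next
    assume "real_matrix_eigenvalue n (\<lambda>i j. ?Q (f i) (f j)) mu"
    then obtain y i0 where y: "i0 < n" "y i0 \<noteq> 0" "\<forall>i<n. (\<Sum>j<n. ?Q (f i) (f j) * y j) = mu * y i"
      unfolding real_matrix_eigenvalue_def by blast
    show "signless_laplacian_eigenvalue V E mu"
      unfolding signless_laplacian_eigenvalue_def
    proof (intro exI[of _ "y \<circ> g"] conjI ballI)
      show "\<exists>v\<in>V. (y \<circ> g) v \<noteq> 0" using y(1,2) fV gf by (metis comp_apply)
      fix v assume "v \<in> V"
      then show "real (Defs.degree E v) * (y \<circ> g) v + (\<Sum>u\<in>{u \<in> V. adj E v u}. (y \<circ> g) u) = mu * (y \<circ> g) v"
        using row[of v "y \<circ> g"] y(3)[rule_format, OF fg(2)] fg gf by simp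
    qed
  qed
qed

lemma signless_laplacian_eigenvalues_finite_nonempty:
  assumes G: "simple_graph V E" and "V \<noteq> {}"
  shows "finite {mu. signless_laplacian_eigenvalue V E mu}"
    and "{mu. signless_laplacian_eigenvalue V E mu} \<noteq> {}"
proof -
  have fV: "finite V" using G unfolding simple_graph_def by simp
  then obtain f where f: "bij_betw f {..<card V} V"
    using ex_bij_betw_nat_finite[of V] by (auto simp: atLeast0LessThan)
  let ?Q = "\<lambda>i j. signless_laplacian_entry E (f i) (f j)"
  have eq: "{mu. signless_laplacian_eigenvalue V E mu} = {mu. real_matrix_eigenvalue (card V) ?Q mu}"
    using signless_laplacian_eigenvalue_iff_matrix[OF G f] by blast
  show "finite {mu. signless_laplacian_eigenvalue V E mu}"
    unfolding eq by (rule finite_real_matrix_eigenvalues)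
  have "0 < card V" using fV \<open>V \<noteq> {}\<close> by (simp add: card_gt_0_iff)
  then have "\<exists>a. real_matrix_eigenvalue (card V) ?Q a"
    by (intro symmetric_real_matrix_eigenvalue_exists) (rule signless_laplacian_entry_sym)
  then show "{mu. signless_laplacian_eigenvalue V E mu} \<noteq> {}" unfolding eq by blast
qed

text \<open>For an eigenvector \<open>x\<close>, look at a vertex \<open>v\<^sub>0\<close> maximising \<open>\<bar>x v\<bar> / d v\<close>: the eigen
  equation at \<open>v\<^sub>0\<close> gives \<open>\<bar>\<mu>\<bar> d v\<^sub>0 \<le> d v\<^sub>0\<^sup>2 + \<Sum>\<^bsub>u \<sim> v\<^sub>0\<^esub> d u\<close>.\<close>

lemma signless_laplacian_eigenvalue_le:
  fixes c :: real
  assumes G: "simple_graph V E" and mu: "signless_laplacian_eigenvalue V E mu" and "0 \<le> c"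
    and bound: "\<forall>v\<in>V. real (card (neighbors E v)) * real (card (neighbors E v)) +
      (\<Sum>u\<in>neighbors E v. real (card (neighbors E u))) \<le> c * real (card (neighbors E v))"
  shows "mu \<le> c"
proof -
  define d where "d v = real (card (neighbors E v))" for v
  from mu obtain x w where w: "w \<in> V" "x w \<noteq> 0" and eq0: "\<forall>v\<in>V.
      real (Defs.degree E v) * x v + (\<Sum>u\<in>{u \<in> V. adj E v u}. x u) = mu * x v"
    unfolding signless_laplacian_eigenvalue_def by blast
  have eq: "\<forall>v\<in>V. d v * x v + (\<Sum>u\<in>neighbors E v. x u) = mu * x v"
    using eq0 unfolding d_def degree_eq_card_neighbors[OF G] adjacent_vertices_eq_neighbors[OF G] .
  define U where "U = {v \<in> V. d v > 0}"
  have fU: "finite U" using G unfolding U_def simple_graph_def by simp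
  show ?thesis
  proof (cases "\<forall>v\<in>U. x v = 0")
    case True
    then have "d w = 0" using w unfolding U_def d_def by auto
    then have "neighbors E w = {}" using finite_neighbors[OF G] unfolding d_def by simp
    then have "mu * x w = 0" using eq w(1) \<open>d w = 0\<close> by force
    then show ?thesis using w(2) \<open>0 \<le> c\<close> by simp
  next
    case False
    define g where "g v = \<bar>x v\<bar> / d v" for v
    from False obtain v1 where v1: "v1 \<in> U" "x v1 \<noteq> 0" by blast
    have "Max (g ` U) \<in> g ` U" using fU v1(1) by (intro Max_in) auto
    then obtain v0 where "Max (g ` U) = g v0" "v0 \<in> U" by (rule imageE)
    then have v0: "v0 \<in> U" "\<forall>v\<in>U. g v \<le> g v0" using fU by (metis Max_ge finite_imageI imageI)+
    have "g v1 > 0" using v1 unfolding g_def U_def by simp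
    then have "g v0 > 0" using v0(2) v1(1) by (meson less_le_trans)
    have v0V: "v0 \<in> V" and d0: "d v0 > 0" using v0(1) unfolding U_def by auto
    have xu: "\<bar>x u\<bar> \<le> g v0 * d u" if "u \<in> neighbors E v0" for u
    proof -
      have "v0 \<in> neighbors E u" using that neighbors_sym by fast
      then have "d u > 0" using finite_neighbors[OF G] unfolding d_def by (auto simp: card_gt_0_iff)
      moreover have "u \<in> V" using that neighbors_subset[OF G] by blast
      ultimately have "g u \<le> g v0" using v0(2) unfolding U_def by blast
      then have "\<bar>x u\<bar> / d u \<le> g v0" unfolding g_def[of u] .
      then show ?thesis using pos_divide_le_eq[OF \<open>d u > 0\<close>] by simp
    qed
    have xv0: "\<bar>x v0\<bar> = g v0 * d v0" using d0 unfolding g_def by simp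
    have "\<bar>mu\<bar> * \<bar>x v0\<bar> = \<bar>d v0 * x v0 + (\<Sum>u\<in>neighbors E v0. x u)\<bar>"
      using eq v0V by (simp add: abs_mult)
    also have "\<dots> \<le> \<bar>d v0 * x v0\<bar> + \<bar>\<Sum>u\<in>neighbors E v0. x u\<bar>" by (rule abs_triangle_ineq)
    also have "\<dots> \<le> d v0 * \<bar>x v0\<bar> + (\<Sum>u\<in>neighbors E v0. \<bar>x u\<bar>)"
      using d0 by (simp add: abs_mult sum_abs)
    also have "\<dots> \<le> d v0 * \<bar>x v0\<bar> + (\<Sum>u\<in>neighbors E v0. g v0 * d u)"
      using xu by (simp add: sum_mono)
    also have "\<dots> = g v0 * (d v0 * d v0 + (\<Sum>u\<in>neighbors E v0. d u))"
      using xv0 by (simp add: sum_distrib_left algebra_simps)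
    also have "\<dots> \<le> g v0 * (c * d v0)"
      using bound v0V \<open>g v0 > 0\<close> unfolding d_def by (simp add: mult_left_mono)
    finally have "\<bar>mu\<bar> * (g v0 * d v0) \<le> c * (g v0 * d v0)" using xv0 by (simp add: algebra_simps)
    then have "\<bar>mu\<bar> \<le> c" using \<open>g v0 > 0\<close> d0 by (simp add: mult_le_cancel_right)
    then show ?thesis by simp
  qed
qed

lemma q_index_le:
  fixes c :: real
  assumes G: "simple_graph V E" and "V \<noteq> {}" and "0 \<le> c"
    and bound: "\<forall>v\<in>V. real (card (neighbors E v)) * real (card (neighbors E v)) +
      (\<Sum>u\<in>neighbors E v. real (card (neighbors E u))) \<le> c * real (card (neighbors E v))"
  shows "q_index V E \<le> c"
  unfolding q_index_def
  using signless_laplacian_eigenvalues_finite_nonempty[OF G \<open>V \<noteq> {}\<close>]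
    signless_laplacian_eigenvalue_le[OF G _ \<open>0 \<le> c\<close> bound]
  by simp

lemma card_neighbors_le_max_degree:
  "simple_graph V E \<Longrightarrow> x \<in> V \<Longrightarrow> card (neighbors E x) \<le> max_degree V E"
proof -
  assume G: "simple_graph V E" and x: "x \<in> V"
  then have "Defs.degree E x \<le> max_degree V E" unfolding max_degree_def simple_graph_def by simp
  then show ?thesis using degree_eq_card_neighbors[OF G] by simp
qed

theorem lemma4p1:
  fixes V :: "'a set" and E :: "'a set set"
  assumes "simple_graph V E"
    and "K33_minor_free V E"
    and "card V \<ge> 11"
    and "max_degree V E \<le> card V - 4"
  shows "q_index V E \<le> real (card V) + 2"
proof -
  note G = assms(1)
  have no_K33: "\<nexists>B. complete_bipartite_model 3 3 V E B"
    using not_K33_minor_free_if_model[OF G] assms(2) by blast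
  have max_deg: "\<forall>x\<in>V. card (neighbors E x) + 4 \<le> card V"
    using card_neighbors_le_max_degree[OF G] assms(3,4) by fastforce
  have "real (card (neighbors E v)) * real (card (neighbors E v)) +
      (\<Sum>u\<in>neighbors E v. real (card (neighbors E u))) \<le> (real (card V) + 2) * real (card (neighbors E v))"
    if "v \<in> V" for v
  proof -
    have "real (card (neighbors E v) * card (neighbors E v) + (\<Sum>u\<in>neighbors E v. card (neighbors E u)))
        \<le> real ((card V + 2) * card (neighbors E v))"
      using degree_sq_plus_sum_neighbor_degrees_le[OF G no_K33 that max_deg] by (simp only: of_nat_le_iff)
    then show ?thesis by (simp add: algebra_simps)
  qed
  moreover have "V \<noteq> {}" using assms(3) by auto
  ultimately show ?thesis using q_index_le[OF G] by simp
qed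

end
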